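(* Assume $M=m-2n\notin-2\mathbb{N}$. Let $T$ be a nonzero integration over the supersphere. Then $T$ has the property that $T(\mathcal{H}_k\mathcal{H}_l)=0=T(\mathcal{H}_l\mathcal{H}_k)$ for all $k\ne l$ (i.e. $T(ab)=T(ba)=0$ for all $a\in\mathcal{H}_k$, $b\in\mathcal{H}_l$) if and only if $T$ is a nonzero scalar multiple of the Pizzetti integral \[ \int_{SS}R=\sum_{k=0}^\infty(-1)^k\frac{2\pi^{M/2}}{4^k\,k!\,\Gamma(k+M/2)}\,(\Delta^kR)(0),\qquad R\in\mathcal{P}. \]
   Context: Let $m,n\ge0$ be integers, $\mathbb{N}=\{0,1,2,\dots\}$, $M=m-2n$. $\mathcal{P}=\mathbb{R}[x_1,\dots,x_m]\otimes\Lambda_{2n}$ is the real algebra generated by commuting $x_1,\dots,x_m$ and anticommuting $\theta_1,\dots,\theta_{2n}$ with $x_i\theta_j=\theta_jx_i$; $\partial_{\theta_j}$ is the Grassmann derivative. $\Delta=4\sum_{j=1}^n\partial_{\theta_{2j-1}}\partial_{\theta_{2j}}-\sum_{j=1}^m\partial_{x_j}^2$, $x^2=\sum_{j=1}^n\theta_{2j-1}\theta_{2j}-\sum_{j=1}^m x_j^2$. $\mathcal{P}_k$ = elements homogeneous of total degree $k$, $\mathcal{H}_k=\{H\in\mathcal{P}_k:\Delta H=0\}$. $(\Delta^kR)(0)$ means evaluation at $x_i=\theta_j=0$ (the sum is finite for $R\in\mathcal{P}$). $Sp(2n)=\{D\in GL_{2n}(\mathbb{R}):D^TJD=J\}$ with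 $J$ block diagonal with $n$ blocks $\begin{pmatrix}0&1/2\\-1/2&0\end{pmatrix}$; $g=(A,D)\in SO(m)\times Sp(2n)$ acts on $f\in\mathcal{P}$ by $f\mapsto f(g\cdot x)$, the image under $x_i\mapsto\sum_kA_{ik}x_k$, $\theta_j\mapsto\sum_lD_{jl}\theta_l$. An integration over the supersphere is a linear functional $T:\mathcal{P}\to\mathbb{R}$ with $T(x^2f)=-T(f)$ and $T(f(g\cdot x))=T(f)$ for all $f\in\mathcal{P}$, $g\in SO(m)\times Sp(2n)$. *)

theory Defs
  imports "HOL-Analysis.Analysis" "HOL-Combinatorics.Permutations"
begin

text \<open>Superpolynomials in R[x_0..x_(m-1)] tensor Grassmann algebra on theta_0..theta_(2n-1)
  (0-indexed; paper's theta_(2j-1), theta_(2j) are our theta_(2j-2), theta_(2j-1)).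
  An element is given by its coefficient function on basis monomials x^a theta_S,
  where a is an exponent vector and theta_S is the ordered product of theta_s, s in S increasing.\<close>

type_synonym spoly = "(nat \<Rightarrow> nat) \<times> nat set \<Rightarrow> real"

definition supp :: "spoly \<Rightarrow> ((nat \<Rightarrow> nat) \<times> nat set) set" where
  "supp f = {p. f p \<noteq> 0}"

definition SP :: "nat \<Rightarrow> nat \<Rightarrow> spoly set" where
  "SP m n = {f. finite (supp f) \<and>
     (\<forall>p\<in>supp f. (\<forall>i\<ge>m. fst p i = 0) \<and> snd p \<subseteq> {..<2*n})}"

definition sp_add :: "spoly \<Rightarrow> spoly \<Rightarrow> spoly" where
  "sp_add f g = (\<lambda>p. f p + g p)"

definition sp_scale :: "real \<Rightarrow> spoly \<Rightarrow> spoly" where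
  "sp_scale c f = (\<lambda>p. c * f p)"

definition sp_one :: spoly where
  "sp_one = (\<lambda>p. if fst p = (\<lambda>_. 0) \<and> snd p = {} then 1 else 0)"

text \<open>Sign from reordering theta_S theta_T (S, T disjoint) into theta_(S union T).\<close>
definition perm_sign :: "nat set \<Rightarrow> nat set \<Rightarrow> real" where
  "perm_sign S T = (-1) ^ card {(s,t). s \<in> S \<and> t \<in> T \<and> t < s}"

definition sp_mult :: "spoly \<Rightarrow> spoly \<Rightarrow> spoly" where
  "sp_mult f g = (\<lambda>(c,U). \<Sum>p\<in>supp f. \<Sum>q\<in>supp g.
      if (\<lambda>i. fst p i + fst q i) = c \<and> snd p \<inter> snd q = {} \<and> snd p \<union> snd q = U
      then perm_sign (snd p) (snd q) * f p * g q else 0)"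

definition sp_pow :: "spoly \<Rightarrow> nat \<Rightarrow> spoly" where
  "sp_pow f k = ((sp_mult f) ^^ k) sp_one"

definition sp_prodlist :: "spoly list \<Rightarrow> spoly" where
  "sp_prodlist xs = foldr sp_mult xs sp_one"

definition xvar :: "nat \<Rightarrow> spoly" where
  "xvar k = (\<lambda>p. if fst p = (\<lambda>i. if i = k then 1 else 0) \<and> snd p = {} then 1 else 0)"

definition tvar :: "nat \<Rightarrow> spoly" where
  "tvar l = (\<lambda>p. if fst p = (\<lambda>_. 0) \<and> snd p = {l} then 1 else 0)"

definition dx :: "nat \<Rightarrow> spoly \<Rightarrow> spoly" where
  "dx i f = (\<lambda>(a,S). real (a i + 1) * f (a(i := a i + 1), S))"

text \<open>(Left) Grassmann derivative in theta_j:
  d_j theta_S = (-1)^#{s in S. s < j} theta_(S - {j}) if j in S.\<close>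
definition dtheta :: "nat \<Rightarrow> spoly \<Rightarrow> spoly" where
  "dtheta j f = (\<lambda>(a,U). if j \<in> U then 0
      else (-1) ^ card {s\<in>U. s < j} * f (a, insert j U))"

definition sp_lap :: "nat \<Rightarrow> nat \<Rightarrow> spoly \<Rightarrow> spoly" where
  "sp_lap m n f = (\<lambda>p. 4 * (\<Sum>j<n. dtheta (2*j) (dtheta (2*j+1) f) p)
                      - (\<Sum>i<m. dx i (dx i f) p))"

definition sp_xsq :: "nat \<Rightarrow> nat \<Rightarrow> spoly" where
  "sp_xsq m n = (\<lambda>p. (\<Sum>j<n. sp_mult (tvar (2*j)) (tvar (2*j+1)) p)
                    - (\<Sum>i<m. sp_mult (xvar i) (xvar i) p))"

definition eval0 :: "spoly \<Rightarrow> real" where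
  "eval0 f = f (\<lambda>_. 0, {})"

definition homogeneous :: "nat \<Rightarrow> nat \<Rightarrow> spoly \<Rightarrow> bool" where
  "homogeneous m k f \<longleftrightarrow> (\<forall>p\<in>supp f. (\<Sum>i<m. fst p i) + card (snd p) = k)"

definition Hk :: "nat \<Rightarrow> nat \<Rightarrow> nat \<Rightarrow> spoly set" where
  "Hk m n k = {f \<in> SP m n. homogeneous m k f \<and> sp_lap m n f = (\<lambda>_. 0)}"

text \<open>Matrices as functions nat => nat => real, only entries with indices in range matter.\<close>
definition mat_det :: "nat \<Rightarrow> (nat \<Rightarrow> nat \<Rightarrow> real) \<Rightarrow> real" where
  "mat_det m A = (\<Sum>p | p permutes {..<m}. of_int (sign p) * (\<Prod>i<m. A i (p i)))"

definition SOm :: "nat \<Rightarrow> (nat \<Rightarrow> nat \<Rightarrow> real) set" where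
  "SOm m = {A. (\<forall>i<m. \<forall>k<m. (\<Sum>j<m. A j i * A j k) = (if i = k then 1 else 0))
               \<and> mat_det m A = 1}"

definition Jmat :: "nat \<Rightarrow> nat \<Rightarrow> real" where
  "Jmat i k = (if even i \<and> k = i + 1 then 1/2 else if odd i \<and> i = k + 1 then -1/2 else 0)"

definition Spn :: "nat \<Rightarrow> (nat \<Rightarrow> nat \<Rightarrow> real) set" where
  "Spn n = {D. \<forall>i<2*n. \<forall>k<2*n.
      (\<Sum>j<2*n. \<Sum>l<2*n. D j i * Jmat j l * D l k) = Jmat i k}"

text \<open>f(g.x): substitute x_i -> sum_k A_ik x_k, theta_j -> sum_l D_jl theta_l.\<close>
definition lin_x :: "nat \<Rightarrow> (nat \<Rightarrow> nat \<Rightarrow> real) \<Rightarrow> nat \<Rightarrow> spoly" where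
  "lin_x m A i = (\<lambda>p. \<Sum>k<m. A i k * xvar k p)"

definition lin_t :: "nat \<Rightarrow> (nat \<Rightarrow> nat \<Rightarrow> real) \<Rightarrow> nat \<Rightarrow> spoly" where
  "lin_t n D j = (\<lambda>p. \<Sum>l<2*n. D j l * tvar l p)"

definition mon_img :: "nat \<Rightarrow> nat \<Rightarrow> (nat \<Rightarrow> nat \<Rightarrow> real) \<Rightarrow> (nat \<Rightarrow> nat \<Rightarrow> real)
    \<Rightarrow> (nat \<Rightarrow> nat) \<Rightarrow> nat set \<Rightarrow> spoly" where
  "mon_img m n A D a S = sp_mult
      (sp_prodlist (map (\<lambda>i. sp_pow (lin_x m A i) (a i)) [0..<m]))
      (sp_prodlist (map (lin_t n D) (sorted_list_of_set S)))"

definition act :: "nat \<Rightarrow> nat \<Rightarrow> (nat \<Rightarrow> nat \<Rightarrow> real) \<Rightarrow> (nat \<Rightarrow> nat \<Rightarrow> real)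
    \<Rightarrow> spoly \<Rightarrow> spoly" where
  "act m n A D f = (\<lambda>c. \<Sum>p\<in>supp f. f p * mon_img m n A D (fst p) (snd p) c)"

definition ss_integration :: "nat \<Rightarrow> nat \<Rightarrow> (spoly \<Rightarrow> real) \<Rightarrow> bool" where
  "ss_integration m n T \<longleftrightarrow>
     (\<forall>f\<in>SP m n. \<forall>g\<in>SP m n. T (sp_add f g) = T f + T g) \<and>
     (\<forall>c. \<forall>f\<in>SP m n. T (sp_scale c f) = c * T f) \<and>
     (\<forall>f\<in>SP m n. T (sp_mult (sp_xsq m n) f) = - T f) \<and>
     (\<forall>A\<in>SOm m. \<forall>D\<in>Spn n. \<forall>f\<in>SP m n. T (act m n A D f) = T f)"

definition superdim :: "nat \<Rightarrow> nat \<Rightarrow> real" where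
  "superdim m n = real m - 2 * real n"

text \<open>Pizzetti integral (the series has only finitely many nonzero terms).\<close>
definition pizzetti :: "nat \<Rightarrow> nat \<Rightarrow> spoly \<Rightarrow> real" where
  "pizzetti m n R = (\<Sum>k. (-1) ^ k * (2 * pi powr (superdim m n / 2))
       / (4 ^ k * fact k * Gamma (real k + superdim m n / 2))
       * eval0 (((sp_lap m n) ^^ k) R))"

end

theory Submission
  imports Defs
begin

text \<open>For \<open>M \<notin> -2\<nat>\<close> every homogeneous superpolynomial of degree \<open>d \<ge> 2\<close> splits as
  \<open>h + x\<^sup>2 g\<close> with \<open>h\<close> harmonic (Fischer decomposition). It is obtained by inverting
  \<open>g \<mapsto> \<Delta>(x\<^sup>2 g) = x\<^sup>2 \<Delta>g + (2M + 4q) g\<close> degree by degree, which is possible because none of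
  the constants \<open>2M + 4q - 4t\<close> vanishes. Hence a linear functional with \<open>T(x\<^sup>2 f) = -T f\<close> is
  determined by its values on harmonics. If \<open>T\<close> is orthogonal across different degrees, pairing
  with the constant \<open>1 \<in> \<H>\<^sub>0\<close> shows that \<open>T\<close> vanishes on \<open>\<H>\<^sub>k\<close>, \<open>k \<ge> 1\<close>, so \<open>T\<close> is a
  multiple of the Pizzetti integral. Conversely the Pizzetti integral satisfies
  \<open>T(x\<^sup>2 f) = -T f\<close> by \<open>\<Gamma>(z + 1) = z \<Gamma>(z)\<close>, and it is orthogonal because
  \<open>\<Delta>\<^sup>j(a b) = 0\<close> for \<open>a\<close> homogeneous of degree \<open>k < j\<close> and \<open>b\<close> harmonic: each Laplacian
  either falls on \<open>a\<close> or splits into first derivatives of both factors.\<close>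

section \<open>Superpolynomials as finitely supported coefficient functions\<close>

type_synonym monomial = "(nat \<Rightarrow> nat) \<times> nat set"

definition sp_monom :: "monomial \<Rightarrow> spoly" where
  "sp_monom q = (\<lambda>p. if p = q then 1 else 0)"

definition sp_finite :: "spoly \<Rightarrow> bool" where
  "sp_finite f \<longleftrightarrow> finite (supp f)"

definition mult_kernel :: "monomial \<Rightarrow> monomial \<Rightarrow> monomial \<Rightarrow> real" where
  "mult_kernel p q x =
    (if (\<lambda>i. fst p i + fst q i) = fst x \<and> snd p \<inter> snd q = {} \<and> snd p \<union> snd q = snd x
     then perm_sign (snd p) (snd q) else 0)"

lemma in_supp_iff [simp]: "p \<in> supp f \<longleftrightarrow> f p \<noteq> 0"
  by (simp add: supp_def)

lemma supp_lincomb_subset: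
  "supp (\<lambda>x. \<Sum>i\<in>I. c i * u i x) \<subseteq> (\<Union>i\<in>I. supp (u i))"
proof
  fix x assume "x \<in> supp (\<lambda>x. \<Sum>i\<in>I. c i * u i x)"
  then have "(\<Sum>i\<in>I. c i * u i x) \<noteq> 0" by simp
  then obtain i where "i \<in> I" "c i * u i x \<noteq> 0" by (meson sum.neutral)
  then show "x \<in> (\<Union>i\<in>I. supp (u i))" by auto
qed

lemma sp_finite_lincomb:
  assumes "finite I" and "\<And>i. i \<in> I \<Longrightarrow> sp_finite (u i)"
  shows "sp_finite (\<lambda>x. \<Sum>i\<in>I. c i * u i x)"
proof -
  have "finite (\<Union>i\<in>I. supp (u i))"
    using assms by (simp add: sp_finite_def)
  then show ?thesis
    unfolding sp_finite_def by (rule finite_subset[OF supp_lincomb_subset])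
qed

lemma sp_finite_zero [simp]: "sp_finite (\<lambda>_. 0)"
  by (simp add: sp_finite_def supp_def)

lemma sp_finite_scale: "sp_finite f \<Longrightarrow> sp_finite (\<lambda>x. c * f x)"
  using sp_finite_lincomb[of "{()}" "\<lambda>_. f" "\<lambda>_. c"] by simp

lemma supp_sp_monom: "supp (sp_monom q) = {q}"
  by (auto simp: supp_def sp_monom_def)

lemma sp_finite_sp_monom [simp]: "sp_finite (sp_monom q)"
  by (simp add: sp_finite_def supp_sp_monom)

lemma sp_monom_expansion:
  "sp_finite f \<Longrightarrow> f = (\<lambda>x. \<Sum>q\<in>supp f. f q * sp_monom q x)"
proof
  fix x assume "sp_finite f"
  have "(\<Sum>q\<in>supp f. f q * sp_monom q x) = (\<Sum>q\<in>supp f. if x = q then f q else 0)"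
    by (intro sum.cong) (auto simp: sp_monom_def)
  also have "\<dots> = f x" using \<open>sp_finite f\<close> by (simp add: sp_finite_def)
  finally show "f x = (\<Sum>q\<in>supp f. f q * sp_monom q x)" by simp
qed

lemma sum_swap3:
  "(\<Sum>p\<in>A. \<Sum>q\<in>B. \<Sum>i\<in>I. h p q i) = (\<Sum>i\<in>I. \<Sum>p\<in>A. \<Sum>q\<in>B. h p q i)"
proof -
  have "(\<Sum>p\<in>A. \<Sum>q\<in>B. \<Sum>i\<in>I. h p q i) = (\<Sum>p\<in>A. \<Sum>i\<in>I. \<Sum>q\<in>B. h p q i)"
    by (rule sum.cong[OF refl], rule sum.swap)
  also have "\<dots> = (\<Sum>i\<in>I. \<Sum>p\<in>A. \<Sum>q\<in>B. h p q i)"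
    by (rule sum.swap)
  finally show ?thesis .
qed

lemma sum_eq_single:
  fixes f :: "'a \<Rightarrow> real"
  assumes "finite J" "j0 \<in> J" "\<And>j. j \<in> J \<Longrightarrow> j \<noteq> j0 \<Longrightarrow> f j = 0"
  shows "sum f J = f j0"
  using sum.mono_neutral_right[of J "{j0}" f] assms by auto

lemma sum_lessThan_double:
  fixes f :: "nat \<Rightarrow> real"
  shows "(\<Sum>l<2*n. f l) = (\<Sum>j<n. f (2*j) + f (2*j+1))"
  by (induction n) (auto simp: mult_2 add.assoc)

lemma sum_fun_upd_Suc:
  fixes a :: "nat \<Rightarrow> nat"
  assumes "i < m"
  shows "(\<Sum>j<m. (a(i := a i + 1)) j) = (\<Sum>j<m. a j) + 1"
proof -
  have "(\<Sum>j<m. (a(i := a i + 1)) j) = (a i + 1) + (\<Sum>j\<in>{..<m} - {i}. a j)"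
    using assms by (simp add: sum.remove)
  also have "\<dots> = (\<Sum>j<m. a j) + 1"
    using assms by (simp add: sum.remove)
  finally show ?thesis .
qed

lemma sp_mult_eq_sum_over:
  assumes "finite A" "finite B" "supp f \<subseteq> A" "supp g \<subseteq> B"
  shows "sp_mult f g x = (\<Sum>p\<in>A. \<Sum>q\<in>B. f p * g q * mult_kernel p q x)"
proof -
  have "sp_mult f g x = (\<Sum>p\<in>supp f. \<Sum>q\<in>supp g. f p * g q * mult_kernel p q x)"
    by (cases x) (auto simp: sp_mult_def mult_kernel_def intro!: sum.cong)
  also have "\<dots> = (\<Sum>p\<in>A. \<Sum>q\<in>supp g. f p * g q * mult_kernel p q x)"
    by (rule sum.mono_neutral_left) (use assms in auto)
  also have "\<dots> = (\<Sum>p\<in>A. \<Sum>q\<in>B. f p * g q * mult_kernel p q x)"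
    by (intro sum.cong refl sum.mono_neutral_left) (use assms in auto)
  finally show ?thesis .
qed

lemma sp_mult_lincomb_left:
  assumes I: "finite I" and u: "\<And>i. i \<in> I \<Longrightarrow> sp_finite (u i)" and g: "sp_finite g"
  shows "sp_mult (\<lambda>x. \<Sum>i\<in>I. c i * u i x) g = (\<lambda>x. \<Sum>i\<in>I. c i * sp_mult (u i) g x)"
proof
  fix x
  let ?A = "\<Union>i\<in>I. supp (u i)"
  have A: "finite ?A" "\<And>i. i \<in> I \<Longrightarrow> supp (u i) \<subseteq> ?A"
    using I u by (auto simp: sp_finite_def simp del: in_supp_iff)
  have "sp_mult (\<lambda>x. \<Sum>i\<in>I. c i * u i x) g x
      = (\<Sum>p\<in>?A. \<Sum>q\<in>supp g. (\<Sum>i\<in>I. c i * u i p) * g q * mult_kernel p q x)"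
    using g by (intro sp_mult_eq_sum_over A(1) supp_lincomb_subset) (auto simp: sp_finite_def)
  also have "\<dots> = (\<Sum>p\<in>?A. \<Sum>q\<in>supp g. \<Sum>i\<in>I. c i * (u i p * g q * mult_kernel p q x))"
    by (simp add: sum_distrib_right mult.assoc)
  also have "\<dots> = (\<Sum>i\<in>I. c i * (\<Sum>p\<in>?A. \<Sum>q\<in>supp g. u i p * g q * mult_kernel p q x))"
    by (subst sum_swap3) (simp add: sum_distrib_left)
  also have "\<dots> = (\<Sum>i\<in>I. c i * sp_mult (u i) g x)"
    using A g by (intro sum.cong refl arg_cong2[where f="(*)"] sp_mult_eq_sum_over[symmetric])
      (auto simp: sp_finite_def)
  finally show "sp_mult (\<lambda>x. \<Sum>i\<in>I. c i * u i x) g x = (\<Sum>i\<in>I. c i * sp_mult (u i) g x)" .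
qed

lemma sp_mult_lincomb_right:
  assumes I: "finite I" and u: "\<And>i. i \<in> I \<Longrightarrow> sp_finite (u i)" and g: "sp_finite g"
  shows "sp_mult g (\<lambda>x. \<Sum>i\<in>I. c i * u i x) = (\<lambda>x. \<Sum>i\<in>I. c i * sp_mult g (u i) x)"
proof
  fix x
  let ?A = "\<Union>i\<in>I. supp (u i)"
  have A: "finite ?A" "\<And>i. i \<in> I \<Longrightarrow> supp (u i) \<subseteq> ?A"
    using I u by (auto simp: sp_finite_def simp del: in_supp_iff)
  have "sp_mult g (\<lambda>x. \<Sum>i\<in>I. c i * u i x) x
      = (\<Sum>p\<in>supp g. \<Sum>q\<in>?A. g p * (\<Sum>i\<in>I. c i * u i q) * mult_kernel p q x)"
    using g by (intro sp_mult_eq_sum_over A(1) supp_lincomb_subset) (auto simp: sp_finite_def)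
  also have "\<dots> = (\<Sum>p\<in>supp g. \<Sum>q\<in>?A. \<Sum>i\<in>I. c i * (g p * u i q * mult_kernel p q x))"
    by (simp add: sum_distrib_left sum_distrib_right mult_ac)
  also have "\<dots> = (\<Sum>i\<in>I. c i * (\<Sum>p\<in>supp g. \<Sum>q\<in>?A. g p * u i q * mult_kernel p q x))"
    by (subst sum_swap3) (simp add: sum_distrib_left)
  also have "\<dots> = (\<Sum>i\<in>I. c i * sp_mult g (u i) x)"
    using A g by (intro sum.cong refl arg_cong2[where f="(*)"] sp_mult_eq_sum_over[symmetric])
      (auto simp: sp_finite_def)
  finally show "sp_mult g (\<lambda>x. \<Sum>i\<in>I. c i * u i x) x = (\<Sum>i\<in>I. c i * sp_mult g (u i) x)" .
qed

definition sp_parity :: "spoly \<Rightarrow> spoly" where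
  "sp_parity f = (\<lambda>(a,S). (-1) ^ card S * f (a,S))"

definition card_below :: "nat set \<Rightarrow> nat \<Rightarrow> nat" where
  "card_below S l = card {s\<in>S. s < l}"

definition card_above :: "nat set \<Rightarrow> nat \<Rightarrow> nat" where
  "card_above S l = card {s\<in>S. l < s}"

definition dtheta_sign :: "nat \<Rightarrow> nat set \<Rightarrow> real" where
  "dtheta_sign l S = (if l \<in> S then (-1) ^ card_below S l else 0)"

definition monom_mult_sign :: "nat set \<Rightarrow> nat set \<Rightarrow> real" where
  "monom_mult_sign S T = (if S \<inter> T = {} then perm_sign S T else 0)"

lemma sp_mult_monom:
  "sp_mult (sp_monom (a,S)) (sp_monom (b,T)) =
    (\<lambda>x. monom_mult_sign S T * sp_monom (\<lambda>i. a i + b i, S \<union> T) x)"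
proof
  fix x
  have "sp_mult (sp_monom (a,S)) (sp_monom (b,T)) x = (\<Sum>p\<in>{(a,S)}. \<Sum>q\<in>{(b,T)}.
      sp_monom (a,S) p * sp_monom (b,T) q * mult_kernel p q x)"
    by (rule sp_mult_eq_sum_over) (auto simp: supp_sp_monom)
  then show "sp_mult (sp_monom (a,S)) (sp_monom (b,T)) x =
      monom_mult_sign S T * sp_monom (\<lambda>i. a i + b i, S \<union> T) x"
    by (cases x) (auto simp: sp_monom_def mult_kernel_def monom_mult_sign_def)
qed

lemma dx_monom: "dx i (sp_monom (a,S)) = (\<lambda>x. real (a i) * sp_monom (a(i := a i - 1), S) x)"
proof
  fix x show "dx i (sp_monom (a,S)) x = real (a i) * sp_monom (a(i := a i - 1), S) x"
  proof (cases x)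
    case (Pair b U)
    show ?thesis
    proof (cases "a i = 0")
      case True
      then have "b(i := b i + 1) \<noteq> a"
        by (metis add_eq_0_iff_both_eq_0 fun_upd_same zero_neq_one)
      then show ?thesis using True by (auto simp: dx_def sp_monom_def Pair)
    next
      case False
      then have "b(i := b i + 1) = a \<longleftrightarrow> b = a(i := a i - 1)"
        by (auto simp: fun_eq_iff split: if_splits)
      moreover have "b = a(i := a i - 1) \<Longrightarrow> real (b i + 1) = real (a i)"
        using False by auto
      ultimately show ?thesis by (auto simp: dx_def sp_monom_def Pair)
    qed
  qed
qed

lemma dtheta_monom:
  "dtheta l (sp_monom (a,S)) = (\<lambda>x. dtheta_sign l S * sp_monom (a, S - {l}) x)"
proof
  fix x show "dtheta l (sp_monom (a,S)) x = dtheta_sign l S * sp_monom (a, S - {l}) x"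
  proof (cases x)
    case (Pair b U)
    have "l \<notin> U \<Longrightarrow> insert l U = S \<longleftrightarrow> l \<in> S \<and> U = S - {l}" by auto
    moreover have "{s \<in> S - {l}. s < l} = {s\<in>S. s < l}" by auto
    ultimately show ?thesis
      by (auto simp: dtheta_def sp_monom_def dtheta_sign_def card_below_def Pair)
  qed
qed

lemma sp_parity_monom: "sp_parity (sp_monom (a,S)) = (\<lambda>x. (-1) ^ card S * sp_monom (a,S) x)"
  by (auto simp: sp_parity_def sp_monom_def)

lemma dx_lincomb:
  "dx i (\<lambda>x. \<Sum>j\<in>I. c j * u j x) = (\<lambda>x. \<Sum>j\<in>I. c j * dx i (u j) x)"
  by (auto simp: dx_def sum_distrib_left mult_ac)

lemma dtheta_lincomb:
  "dtheta l (\<lambda>x. \<Sum>j\<in>I. c j * u j x) = (\<lambda>x. \<Sum>j\<in>I. c j * dtheta l (u j) x)"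
  by (auto simp: dtheta_def sum_distrib_left sum_distrib_right mult_ac fun_eq_iff)

lemma sp_parity_lincomb:
  "sp_parity (\<lambda>x. \<Sum>j\<in>I. c j * u j x) = (\<lambda>x. \<Sum>j\<in>I. c j * sp_parity (u j) x)"
  by (auto simp: sp_parity_def sum_distrib_left mult_ac)

lemma sp_lap_lincomb:
  "sp_lap m n (\<lambda>x. \<Sum>j\<in>I. c j * u j x) = (\<lambda>x. \<Sum>j\<in>I. c j * sp_lap m n (u j) x)"
  by (auto simp: sp_lap_def dx_lincomb dtheta_lincomb sum_distrib_left sum_subtractf[symmetric]
      algebra_simps sum.swap[of _ I])

lemma dx_zero [simp]: "dx i (\<lambda>_. 0) = (\<lambda>_. 0)"
  by (auto simp: dx_def)

lemma dtheta_zero [simp]: "dtheta l (\<lambda>_. 0) = (\<lambda>_. 0)"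
  by (auto simp: dtheta_def)

lemma sp_parity_zero [simp]: "sp_parity (\<lambda>_. 0) = (\<lambda>_. 0)"
  by (auto simp: sp_parity_def)

lemma sp_lap_zero [simp]: "sp_lap m n (\<lambda>_. 0) = (\<lambda>_. 0)"
  by (auto simp: sp_lap_def)

lemma sp_lap_pow_zero [simp]: "(sp_lap m n ^^ k) (\<lambda>_. 0) = (\<lambda>_. 0)"
  by (induction k) auto

lemma dx_scale: "dx i (\<lambda>x. c * f x) = (\<lambda>x. c * dx i f x)"
  by (auto simp: dx_def fun_eq_iff)

lemma dtheta_scale: "dtheta l (\<lambda>x. c * f x) = (\<lambda>x. c * dtheta l f x)"
  by (auto simp: dtheta_def fun_eq_iff)

lemma sp_parity_scale: "sp_parity (\<lambda>x. c * f x) = (\<lambda>x. c * sp_parity f x)"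
  by (auto simp: sp_parity_def fun_eq_iff)

lemma sp_mult_scale_left:
  "sp_finite f \<Longrightarrow> sp_finite g \<Longrightarrow> sp_mult (\<lambda>x. c * f x) g = (\<lambda>x. c * sp_mult f g x)"
  using sp_mult_lincomb_left[of "{()}" "\<lambda>_. f" g "\<lambda>_. c"] by simp

lemma sp_mult_scale_right:
  "sp_finite f \<Longrightarrow> sp_finite g \<Longrightarrow> sp_mult g (\<lambda>x. c * f x) = (\<lambda>x. c * sp_mult g f x)"
  using sp_mult_lincomb_right[of "{()}" "\<lambda>_. f" g "\<lambda>_. c"] by simp

lemma sp_finite_linear_image:
  assumes f: "sp_finite f"
    and L: "\<And>(I::monomial set) c u. L (\<lambda>x. \<Sum>j\<in>I. c j * u j x) = (\<lambda>x. \<Sum>j\<in>I. c j * L (u j) x)"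
    and L_monom: "\<And>q. sp_finite (L (sp_monom q))"
  shows "sp_finite (L f)"
proof -
  have "L f = (\<lambda>x. \<Sum>q\<in>supp f. f q * L (sp_monom q) x)"
    by (subst sp_monom_expansion[OF f]) (rule L)
  moreover have "sp_finite (\<lambda>x. \<Sum>q\<in>supp f. f q * L (sp_monom q) x)"
    by (rule sp_finite_lincomb) (use f L_monom in \<open>auto simp: sp_finite_def\<close>)
  ultimately show ?thesis by simp
qed

lemma sp_finite_dx: "sp_finite f \<Longrightarrow> sp_finite (dx i f)"
  by (rule sp_finite_linear_image) (auto simp: dx_lincomb dx_monom sp_finite_scale)

lemma sp_finite_dtheta: "sp_finite f \<Longrightarrow> sp_finite (dtheta l f)"
  by (rule sp_finite_linear_image)
    (auto simp: dtheta_lincomb dtheta_monom sp_finite_scale split: prod.split)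

lemma sp_finite_sp_parity: "sp_finite f \<Longrightarrow> sp_finite (sp_parity f)"
  by (rule sp_finite_linear_image)
    (auto simp: sp_parity_lincomb sp_parity_monom sp_finite_scale split: prod.split)

lemma dx_add: "dx i (\<lambda>x. f x + g x) = (\<lambda>x. dx i f x + dx i g x)"
  by (auto simp: dx_def fun_eq_iff algebra_simps)

lemma dtheta_add: "dtheta i (\<lambda>x. f x + g x) = (\<lambda>x. dtheta i f x + dtheta i g x)"
  by (auto simp: dtheta_def fun_eq_iff algebra_simps)

lemma dx_diff: "dx i (\<lambda>x. f x - g x) = (\<lambda>x. dx i f x - dx i g x)"
  by (auto simp: dx_def fun_eq_iff algebra_simps)

lemma dtheta_diff: "dtheta i (\<lambda>x. f x - g x) = (\<lambda>x. dtheta i f x - dtheta i g x)"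
  by (auto simp: dtheta_def fun_eq_iff algebra_simps)

lemma sp_parity_diff:
  "sp_parity (\<lambda>x. f x - g x) = (\<lambda>x. sp_parity f x - sp_parity g x)"
  by (auto simp: sp_parity_def fun_eq_iff algebra_simps)

lemma dx_sum: "dx i (\<lambda>x. \<Sum>j\<in>J. C j x) = (\<lambda>x. \<Sum>j\<in>J. dx i (C j) x)"
  by (auto simp: dx_def fun_eq_iff sum_distrib_left)

lemma dtheta_sum:
  "dtheta i (\<lambda>x. \<Sum>j\<in>J. C j x) = (\<lambda>x. \<Sum>j\<in>J. dtheta i (C j) x)"
  by (auto simp: dtheta_def fun_eq_iff sum_distrib_left)

lemma sp_parity_sum:
  "sp_parity (\<lambda>x. \<Sum>j\<in>J. C j x) = (\<lambda>x. \<Sum>j\<in>J. sp_parity (C j) x)"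
  by (auto simp: sp_parity_def fun_eq_iff sum_distrib_left)

lemma sp_lap_add:
  "sp_lap m n (\<lambda>x. f x + g x) = (\<lambda>x. sp_lap m n f x + sp_lap m n g x)"
  by (simp add: sp_lap_def dx_add dtheta_add sum.distrib algebra_simps)

lemma sp_lap_diff:
  "sp_lap m n (\<lambda>x. f x - g x) = (\<lambda>x. sp_lap m n f x - sp_lap m n g x)"
  by (simp add: sp_lap_def dx_diff dtheta_diff sum_subtractf algebra_simps)

lemma sp_lap_scale: "sp_lap m n (\<lambda>x. c * f x) = (\<lambda>x. c * sp_lap m n f x)"
  by (simp add: sp_lap_def dx_scale dtheta_scale sum_distrib_left algebra_simps)

lemma sp_lap_sum:
  "sp_lap m n (\<lambda>x. \<Sum>j\<in>J. C j x) = (\<lambda>x. \<Sum>j\<in>J. sp_lap m n (C j) x)"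
  using sp_lap_lincomb[of m n "\<lambda>_. 1" C J] by simp

lemma sp_lap_pow_add:
  "(sp_lap m n ^^ k) (\<lambda>x. f x + g x) = (\<lambda>x. (sp_lap m n ^^ k) f x + (sp_lap m n ^^ k) g x)"
  by (induction k) (auto simp: sp_lap_add)

lemma sp_lap_pow_diff:
  "(sp_lap m n ^^ k) (\<lambda>x. f x - g x) = (\<lambda>x. (sp_lap m n ^^ k) f x - (sp_lap m n ^^ k) g x)"
  by (induction k) (auto simp: sp_lap_diff)

lemma sp_lap_pow_scale:
  "(sp_lap m n ^^ k) (\<lambda>x. c * f x) = (\<lambda>x. c * (sp_lap m n ^^ k) f x)"
  by (induction k) (auto simp: sp_lap_scale)

lemma sp_lap_pow_sum:
  "(sp_lap m n ^^ k) (\<lambda>x. \<Sum>j\<in>J. C j x) = (\<lambda>x. \<Sum>j\<in>J. (sp_lap m n ^^ k) (C j) x)"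
  by (induction k) (auto simp: sp_lap_sum)

lemma sp_mult_diff_left:
  "sp_finite f \<Longrightarrow> sp_finite g \<Longrightarrow> sp_finite h \<Longrightarrow>
    sp_mult (\<lambda>x. f x - g x) h = (\<lambda>x. sp_mult f h x - sp_mult g h x)"
  using sp_mult_lincomb_left[of "{True,False}" "\<lambda>b. if b then f else g" h "\<lambda>b. if b then 1 else -1"]
  by simp

lemma sp_mult_diff_right:
  "sp_finite f \<Longrightarrow> sp_finite g \<Longrightarrow> sp_finite h \<Longrightarrow>
    sp_mult h (\<lambda>x. f x - g x) = (\<lambda>x. sp_mult h f x - sp_mult h g x)"
  using sp_mult_lincomb_right[of "{True,False}" "\<lambda>b. if b then f else g" h "\<lambda>b. if b then 1 else -1"]
  by simp

lemma sp_mult_sum_left: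
  "finite J \<Longrightarrow> (\<And>j. j \<in> J \<Longrightarrow> sp_finite (C j)) \<Longrightarrow> sp_finite h \<Longrightarrow>
    sp_mult (\<lambda>x. \<Sum>j\<in>J. C j x) h = (\<lambda>x. \<Sum>j\<in>J. sp_mult (C j) h x)"
  using sp_mult_lincomb_left[of J C h "\<lambda>_. 1"] by simp

lemma sp_mult_sum_right:
  "finite J \<Longrightarrow> (\<And>j. j \<in> J \<Longrightarrow> sp_finite (C j)) \<Longrightarrow> sp_finite h \<Longrightarrow>
    sp_mult h (\<lambda>x. \<Sum>j\<in>J. C j x) = (\<lambda>x. \<Sum>j\<in>J. sp_mult h (C j) x)"
  using sp_mult_lincomb_right[of J C h "\<lambda>_. 1"] by simp

lemma sp_parity_sp_parity [simp]: "sp_parity (sp_parity f) = f"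
  by (auto simp: sp_parity_def fun_eq_iff power_mult_distrib[symmetric])

lemma sp_mult_zero_left [simp]: "sp_mult (\<lambda>_. 0) g = (\<lambda>_. 0)"
  by (simp add: sp_mult_def supp_def fun_eq_iff)

lemma sp_mult_zero_right [simp]: "sp_mult g (\<lambda>_. 0) = (\<lambda>_. 0)"
  by (simp add: sp_mult_def supp_def fun_eq_iff)

section \<open>Graded Leibniz rules\<close>

lemma card_below_plus_card_above:
  assumes "finite S" "l \<notin> S" shows "card_below S l + card_above S l = card S"
proof -
  have "S = {s\<in>S. s < l} \<union> {s\<in>S. l < s}" using assms(2) by (auto, metis linorder_neq_iff)
  then show ?thesis unfolding card_below_def card_above_def
    by (metis (no_types, lifting) assms(1) card_Un_disjoint disjoint_iff finite_Un mem_Collect_eq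
        order_less_asym)
qed

lemma card_below_Un:
  assumes "finite S" "finite T" "S \<inter> T = {}"
  shows "card_below (S \<union> T) l = card_below S l + card_below T l"
proof -
  have "{s\<in>S \<union> T. s < l} = {s\<in>S. s < l} \<union> {s\<in>T. s < l}" by auto
  then show ?thesis using assms unfolding card_below_def
    by (simp add: card_Un_disjoint disjoint_iff)
qed

lemma card_below_Diff_self [simp]: "card_below (S - {l}) l = card_below S l"
  unfolding card_below_def by (rule arg_cong[where f=card]) auto

lemma perm_sign_remove_left:
  assumes "finite S" "finite T" "l \<in> S"
  shows "perm_sign S T = perm_sign (S - {l}) T * (-1) ^ card_below T l"
proof -
  let ?A = "{(s,t). s \<in> S - {l} \<and> t \<in> T \<and> t < s}"
  let ?B = "{(s,t). s = l \<and> t \<in> T \<and> t < s}"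
  have "{(s,t). s \<in> S \<and> t \<in> T \<and> t < s} = ?A \<union> ?B" using assms(3) by auto
  moreover have "finite ?A" "finite ?B"
    by (rule finite_subset[of _ "S \<times> T"], use assms in auto)+
  moreover have "?B = (\<lambda>t. (l,t)) ` {t\<in>T. t < l}" by auto
  then have "card ?B = card_below T l" by (simp add: card_image inj_on_def card_below_def)
  ultimately have "card {(s,t). s \<in> S \<and> t \<in> T \<and> t < s} = card ?A + card_below T l"
    by (simp add: card_Un_disjoint disjoint_iff)
  then show ?thesis by (simp add: perm_sign_def power_add)
qed

lemma perm_sign_remove_right:
  assumes "finite S" "finite T" "l \<in> T"
  shows "perm_sign S T = perm_sign S (T - {l}) * (-1) ^ card_above S l"
proof -
  let ?A = "{(s,t). s \<in> S \<and> t \<in> T - {l} \<and> t < s}"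
  let ?B = "{(s,t). s \<in> S \<and> t = l \<and> t < s}"
  have "{(s,t). s \<in> S \<and> t \<in> T \<and> t < s} = ?A \<union> ?B" using assms(3) by auto
  moreover have "finite ?A" "finite ?B"
    by (rule finite_subset[of _ "S \<times> T"], use assms in auto)+
  moreover have "?B = (\<lambda>s. (s,l)) ` {s\<in>S. l < s}" by auto
  then have "card ?B = card_above S l" by (simp add: card_image inj_on_def card_above_def)
  ultimately have "card {(s,t). s \<in> S \<and> t \<in> T \<and> t < s} = card ?A + card_above S l"
    by (simp add: card_Un_disjoint disjoint_iff)
  then show ?thesis by (simp add: perm_sign_def power_add)
qed

lemma perm_sign_empty_left [simp]: "perm_sign {} T = 1"
  by (simp add: perm_sign_def)

lemma perm_sign_empty_right [simp]: "perm_sign S {} = 1"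
  by (simp add: perm_sign_def)

lemma monom_mult_sign_empty_left [simp]: "monom_mult_sign {} T = 1"
  by (simp add: monom_mult_sign_def)

lemma perm_sign_consecutive: "perm_sign {l} {Suc l} = 1"
proof -
  have empty: "{(s, t). s = l \<and> t = Suc l \<and> t < s} = {}" by auto
  show ?thesis by (simp add: perm_sign_def empty)
qed

lemma perm_sign_singleton_left: "finite T \<Longrightarrow> perm_sign {l} T = (-1) ^ card_below T l"
  using perm_sign_remove_left[of "{l}" T l] by simp

lemma neg_one_power_square: "((-1::real) ^ k) * (-1) ^ k = 1"
  by (simp add: power_mult_distrib[symmetric])

lemma leibniz_sign_left:
  assumes "finite S" "finite T" "l \<in> S" "l \<notin> T"
  shows "monom_mult_sign S T * dtheta_sign l (S \<union> T) =
      dtheta_sign l S * monom_mult_sign (S - {l}) T"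
proof (cases "S \<inter> T = {}")
  case True
  then show ?thesis
    using assms perm_sign_remove_left[of S T l] card_below_Un[of S T l]
    by (simp add: dtheta_sign_def monom_mult_sign_def power_add algebra_simps neg_one_power_square
        Diff_Int_distrib2)
next
  case False
  then have "(S - {l}) \<inter> T \<noteq> {}" using assms(4) by auto
  with False show ?thesis by (simp add: monom_mult_sign_def)
qed

lemma leibniz_sign_right:
  assumes "finite S" "finite T" "l \<notin> S" "l \<in> T"
  shows "monom_mult_sign S T * dtheta_sign l (S \<union> T)
    = (-1) ^ card S * dtheta_sign l T * monom_mult_sign S (T - {l})"
proof (cases "S \<inter> T = {}")
  case True
  have "S \<inter> (T - {l}) = {}" "card S = card_below S l + card_above S l"
    using True card_below_plus_card_above[of S l] assms by auto
  then show ?thesis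
    using True assms perm_sign_remove_right[of S T l] card_below_Un[of S T l]
    by (simp add: dtheta_sign_def monom_mult_sign_def power_add algebra_simps neg_one_power_square)
next
  case False
  then have "S \<inter> (T - {l}) \<noteq> {}" using assms(3) by auto
  with False show ?thesis by (simp add: monom_mult_sign_def)
qed

text \<open>When both factors contain \<open>\<theta>\<^sub>l\<close> the product vanishes, and the two terms of the graded
  Leibniz rule cancel because moving \<open>\<theta>\<^sub>l\<close> across \<open>S - {l}\<close> costs \<open>(-1)^(card S - 1)\<close>.\<close>
lemma leibniz_sign_cancel:
  assumes "finite S" "finite T" "l \<in> S" "l \<in> T"
  shows "dtheta_sign l S * monom_mult_sign (S - {l}) T
    + (-1) ^ card S * dtheta_sign l T * monom_mult_sign S (T - {l}) = 0"
proof (cases "(S - {l}) \<inter> T = {}")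
  case True
  let ?S' = "S - {l}" and ?T' = "T - {l}"
  have "card S = card_below ?S' l + card_above ?S' l + 1"
    using card_below_plus_card_above[of ?S' l] card_Suc_Diff1[of S l] assms by simp
  moreover have "?S' \<inter> ?T' = {}" "S \<inter> ?T' = {}" using True by auto
  ultimately show ?thesis
    using assms perm_sign_remove_right[of ?S' T l] perm_sign_remove_left[of S ?T' l]
    by (simp add: dtheta_sign_def monom_mult_sign_def True power_add algebra_simps
        neg_one_power_square)
next
  case False
  then have "S \<inter> (T - {l}) \<noteq> {}" by auto
  with False show ?thesis by (simp add: monom_mult_sign_def)
qed

lemma dtheta_sp_mult_monom:
  assumes "finite S" "finite T"
  shows "dtheta l (sp_mult (sp_monom (a,S)) (sp_monom (b,T))) =
    (\<lambda>x. sp_mult (dtheta l (sp_monom (a,S))) (sp_monom (b,T)) x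
       + sp_mult (sp_parity (sp_monom (a,S))) (dtheta l (sp_monom (b,T))) x)"
proof -
  define ab where "ab = (\<lambda>i. a i + b i)"
  have "monom_mult_sign S T * (dtheta_sign l (S \<union> T) * sp_monom (ab, S \<union> T - {l}) x) =
      dtheta_sign l S * (monom_mult_sign (S - {l}) T * sp_monom (ab, (S - {l}) \<union> T) x)
      + (-1) ^ card S
        * (dtheta_sign l T * (monom_mult_sign S (T - {l}) * sp_monom (ab, S \<union> (T - {l})) x))"
    for x
  proof -
    consider "l \<in> S" "l \<in> T" | "l \<in> S" "l \<notin> T" | "l \<notin> S" "l \<in> T" | "l \<notin> S" "l \<notin> T"
      by blast
    then show ?thesis
    proof cases
      case 1
      then have "(S - {l}) \<union> T = S \<union> (T - {l})" "monom_mult_sign S T = 0"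
        by (auto simp: monom_mult_sign_def)
      moreover have "(dtheta_sign l S * monom_mult_sign (S - {l}) T
          + (-1) ^ card S * dtheta_sign l T * monom_mult_sign S (T - {l}))
          * sp_monom (ab, S \<union> (T - {l})) x = 0"
        using leibniz_sign_cancel[OF assms 1] by simp
      ultimately show ?thesis by (simp add: algebra_simps)
    next
      case 2
      then have "(S - {l}) \<union> T = S \<union> T - {l}" by auto
      then show ?thesis using leibniz_sign_left[OF assms 2] 2 by (simp add: dtheta_sign_def)
    next
      case 3
      then have "S \<union> (T - {l}) = S \<union> T - {l}" by auto
      then show ?thesis using leibniz_sign_right[OF assms 3] 3 by (simp add: dtheta_sign_def)
    next
      case 4
      then show ?thesis by (simp add: dtheta_sign_def)
    qed
  qed
  then show ?thesis
    by (simp add: sp_mult_monom dtheta_monom sp_parity_monom sp_mult_scale_left sp_mult_scale_right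
        sp_finite_scale dtheta_scale ab_def fun_eq_iff)
qed

lemma dx_sp_mult_monom:
  "dx i (sp_mult (sp_monom (a,S)) (sp_monom (b,T))) =
    (\<lambda>x. sp_mult (dx i (sp_monom (a,S))) (sp_monom (b,T)) x
       + sp_mult (sp_monom (a,S)) (dx i (sp_monom (b,T))) x)"
proof -
  define ab where "ab = (\<lambda>i. a i + b i)"
  have a: "a i \<noteq> 0 \<Longrightarrow> (\<lambda>j. (a(i := a i - 1)) j + b j) = ab(i := ab i - 1)"
    and b: "b i \<noteq> 0 \<Longrightarrow> (\<lambda>j. a j + (b(i := b i - 1)) j) = ab(i := ab i - 1)"
    by (auto simp: ab_def fun_eq_iff)
  have "monom_mult_sign S T * (real (ab i) * sp_monom (ab(i := ab i - 1), S \<union> T) x) =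
     real (a i) * (monom_mult_sign S T * sp_monom (\<lambda>j. (a(i := a i - 1)) j + b j, S \<union> T) x) +
     real (b i) * (monom_mult_sign S T * sp_monom (\<lambda>j. a j + (b(i := b i - 1)) j, S \<union> T) x)"
    for x
  proof (cases "a i = 0")
    case True
    then show ?thesis using b by (cases "b i = 0") (simp_all add: ab_def)
  next
    case False
    then show ?thesis using a b by (cases "b i = 0") (simp_all add: ab_def algebra_simps)
  qed
  then show ?thesis
    by (simp add: sp_mult_monom dx_monom dx_scale sp_mult_scale_left sp_mult_scale_right ab_def
        fun_eq_iff)
qed

text \<open>Linearity is only required for sums over sets of monomials, which is all that the monomial
  expansion of a superpolynomial needs.\<close>
definition sp_linear_op :: "(spoly \<Rightarrow> spoly) \<Rightarrow> bool" where
  "sp_linear_op L \<longleftrightarrow>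
     (\<forall>(I::monomial set) c u. L (\<lambda>x. \<Sum>j\<in>I. c j * u j x) = (\<lambda>x. \<Sum>j\<in>I. c j * L (u j) x)) \<and>
     (\<forall>f. sp_finite f \<longrightarrow> sp_finite (L f))"

definition sp_bilinear :: "(spoly \<Rightarrow> spoly \<Rightarrow> spoly) \<Rightarrow> bool" where
  "sp_bilinear B \<longleftrightarrow>
     (\<forall>(I::monomial set) c u g. finite I \<longrightarrow> (\<forall>i\<in>I. sp_finite (u i)) \<longrightarrow> sp_finite g \<longrightarrow>
        B (\<lambda>x. \<Sum>i\<in>I. c i * u i x) g = (\<lambda>x. \<Sum>i\<in>I. c i * B (u i) g x) \<and>
        B g (\<lambda>x. \<Sum>i\<in>I. c i * u i x) = (\<lambda>x. \<Sum>i\<in>I. c i * B g (u i) x))"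

lemma sp_linear_op_id: "sp_linear_op (\<lambda>f. f)"
  by (simp add: sp_linear_op_def)

lemma sp_linear_op_dx: "sp_linear_op (dx i)"
  by (simp add: sp_linear_op_def dx_lincomb sp_finite_dx)

lemma sp_linear_op_dtheta: "sp_linear_op (dtheta l)"
  by (simp add: sp_linear_op_def dtheta_lincomb sp_finite_dtheta)

lemma sp_linear_op_sp_parity: "sp_linear_op sp_parity"
  by (simp add: sp_linear_op_def sp_parity_lincomb sp_finite_sp_parity)

lemma sp_bilinear_sp_mult: "sp_bilinear sp_mult"
  by (simp add: sp_bilinear_def sp_mult_lincomb_left sp_mult_lincomb_right)

lemma sp_bilinear_compose:
  "sp_linear_op L \<Longrightarrow> sp_bilinear B \<Longrightarrow> sp_bilinear (\<lambda>f g. L (B f g))"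
  by (simp add: sp_linear_op_def sp_bilinear_def)

lemma sp_bilinear_precompose:
  assumes "sp_linear_op L1" "sp_linear_op L2" "sp_bilinear B"
  shows "sp_bilinear (\<lambda>f g. B (L1 f) (L2 g))"
  using assms by (simp add: sp_linear_op_def sp_bilinear_def)

lemma sp_bilinear_add:
  "sp_bilinear B1 \<Longrightarrow> sp_bilinear B2 \<Longrightarrow> sp_bilinear (\<lambda>f g x. B1 f g x + B2 f g x)"
  by (simp add: sp_bilinear_def sum_distrib_left sum.distrib distrib_left)

lemma sp_bilinear_monom_expansion:
  assumes B: "sp_bilinear B" and f: "sp_finite f" and g: "sp_finite g"
  shows "B f g = (\<lambda>x. \<Sum>q\<in>supp f. f q * (\<Sum>r\<in>supp g. g r * B (sp_monom q) (sp_monom r) x))"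
proof -
  have fin: "finite (supp f)" "finite (supp g)" using f g by (auto simp: sp_finite_def)
  have "B f g = B (\<lambda>x. \<Sum>q\<in>supp f. f q * sp_monom q x) g"
    by (subst sp_monom_expansion[OF f]) (rule refl)
  also have "\<dots> = (\<lambda>x. \<Sum>q\<in>supp f. f q * B (sp_monom q) g x)"
    using B fin g by (simp add: sp_bilinear_def)
  also have "\<dots> = (\<lambda>x. \<Sum>q\<in>supp f. f q * B (sp_monom q) (\<lambda>x. \<Sum>r\<in>supp g. g r * sp_monom r x) x)"
    by (subst sp_monom_expansion[OF g]) (rule refl)
  also have "\<dots> = (\<lambda>x. \<Sum>q\<in>supp f. f q * (\<Sum>r\<in>supp g. g r * B (sp_monom q) (sp_monom r) x))"
    using B fin by (simp add: sp_bilinear_def)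
  finally show ?thesis .
qed

lemma sp_bilinear_eqI:
  assumes "sp_bilinear B1" "sp_bilinear B2"
    and "\<And>q r. Q q \<Longrightarrow> Q r \<Longrightarrow> B1 (sp_monom q) (sp_monom r) = B2 (sp_monom q) (sp_monom r)"
    and "sp_finite f" "sp_finite g" "\<forall>p\<in>supp f. Q p" "\<forall>p\<in>supp g. Q p"
  shows "B1 f g = B2 f g"
proof -
  have "B1 (sp_monom q) (sp_monom r) =
      B2 (sp_monom q) (sp_monom r)" if "q \<in> supp f" "r \<in> supp g" for q r
    using assms(3,6,7) that by blast
  then show ?thesis
    unfolding sp_bilinear_monom_expansion[OF assms(1,4,5)] sp_bilinear_monom_expansion[OF assms(2,4,5)]
    by (auto intro!: sum.cong)
qed

lemma SP_iff:
  "f \<in> SP m n \<longleftrightarrow> sp_finite f \<and> (\<forall>p. f p \<noteq> 0 \<longrightarrow> (\<forall>i\<ge>m. fst p i = 0) \<and> snd p \<subseteq> {..<2*n})"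
  by (simp add: SP_def sp_finite_def Ball_def)

lemma SP_I:
  "sp_finite f \<Longrightarrow> (\<And>p. f p \<noteq> 0 \<Longrightarrow> (\<forall>i\<ge>m. fst p i = 0) \<and> snd p \<subseteq> {..<2*n}) \<Longrightarrow> f \<in> SP m n"
  by (simp add: SP_iff)

lemma SP_D:
  "f \<in> SP m n \<Longrightarrow> f p \<noteq> 0 \<Longrightarrow> (\<forall>i\<ge>m. fst p i = 0) \<and> snd p \<subseteq> {..<2*n}"
  by (simp add: SP_def)

lemma SP_imp_sp_finite: "f \<in> SP m n \<Longrightarrow> sp_finite f"
  by (simp add: SP_iff)

lemma SP_finite_snd:
  "f \<in> SP m n \<Longrightarrow> f p \<noteq> 0 \<Longrightarrow> finite (snd p)"
  using SP_D[of f m n p] finite_subset[of "snd p" "{..<2*n}"] by auto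

lemma SP_infinite_zero: "f \<in> SP m n \<Longrightarrow> infinite S \<Longrightarrow> f (a, S) = 0"
  using SP_finite_snd[of f m n "(a,S)"] by auto

lemma supp_sp_mult:
  assumes "sp_finite f" "sp_finite g" "sp_mult f g x \<noteq> 0"
  obtains p q where "f p \<noteq> 0" "g q \<noteq> 0" "fst x = (\<lambda>i. fst p i + fst q i)"
    "snd p \<inter> snd q = {}" "snd x = snd p \<union> snd q"
proof -
  have "sp_mult f g x = (\<Sum>p\<in>supp f. \<Sum>q\<in>supp g. f p * g q * mult_kernel p q x)"
    using assms by (intro sp_mult_eq_sum_over) (auto simp: sp_finite_def)
  with assms(3) obtain p q where "p \<in> supp f" "q \<in> supp g" "mult_kernel p q x \<noteq> 0"
    by (metis (no_types, lifting) mult_eq_0_iff sum.neutral)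
  then show ?thesis by (intro that[of p q]) (auto simp: mult_kernel_def split: if_splits)
qed

lemma sp_finite_sp_mult:
  assumes "sp_finite f" "sp_finite g" shows "sp_finite (sp_mult f g)"
proof -
  let ?\<phi> = "\<lambda>(p::monomial, q::monomial). ((\<lambda>i. fst p i + fst q i), snd p \<union> snd q)"
  have "supp (sp_mult f g) \<subseteq> ?\<phi> ` (supp f \<times> supp g)"
  proof
    fix x assume "x \<in> supp (sp_mult f g)"
    then have "sp_mult f g x \<noteq> 0" by simp
    then obtain p q where "f p \<noteq> 0" "g q \<noteq> 0" "fst x = (\<lambda>i. fst p i + fst q i)"
      "snd p \<inter> snd q = {}" "snd x = snd p \<union> snd q"
      using supp_sp_mult[OF assms] by blast
    then show "x \<in> ?\<phi> ` (supp f \<times> supp g)"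
      by (intro image_eqI[of _ _ "(p,q)"]) (auto simp: prod_eq_iff)
  qed
  moreover have "finite (supp f \<times> supp g)" using assms by (auto simp: sp_finite_def)
  ultimately show ?thesis by (auto simp: sp_finite_def intro: finite_subset)
qed

lemma SP_sp_mult:
  assumes "f \<in> SP m n" "g \<in> SP m n" shows "sp_mult f g \<in> SP m n"
proof -
  have fin: "sp_finite f" "sp_finite g" using assms SP_imp_sp_finite by auto
  show ?thesis
  proof (rule SP_I)
    fix x assume "sp_mult f g x \<noteq> 0"
    then obtain p q where "f p \<noteq> 0" "g q \<noteq> 0" "fst x = (\<lambda>i. fst p i + fst q i)" "snd x = snd p \<union> snd q"
      using supp_sp_mult[OF fin] by metis
    then show "(\<forall>i\<ge>m. fst x i = 0) \<and> snd x \<subseteq> {..<2 * n}"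
      using SP_D[OF assms(1), of p] SP_D[OF assms(2), of q] by auto
  qed (use fin sp_finite_sp_mult in blast)
qed

lemma SP_lincomb:
  assumes "finite I" "\<And>i. i \<in> I \<Longrightarrow> u i \<in> SP m n"
  shows "(\<lambda>x. \<Sum>i\<in>I. c i * u i x) \<in> SP m n"
proof (rule SP_I)
  show "sp_finite (\<lambda>x. \<Sum>i\<in>I. c i * u i x)"
    using assms sp_finite_lincomb SP_imp_sp_finite by blast
  fix x assume "(\<Sum>i\<in>I. c i * u i x) \<noteq> 0"
  then obtain i where "i \<in> I" "c i * u i x \<noteq> 0" by (meson sum.neutral)
  then show "(\<forall>i\<ge>m. fst x i = 0) \<and> snd x \<subseteq> {..<2 * n}" using SP_D assms(2)
    by (metis mult_zero_right)
qed

lemma SP_add: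
  "f \<in> SP m n \<Longrightarrow> g \<in> SP m n \<Longrightarrow> (\<lambda>x. f x + g x) \<in> SP m n"
  using SP_lincomb[of "{True,False}" "\<lambda>b. if b then f else g" m n "\<lambda>_. 1"] by simp

lemma SP_scale: "f \<in> SP m n \<Longrightarrow> (\<lambda>x. c * f x) \<in> SP m n"
  using SP_lincomb[of "{()}" "\<lambda>_. f" m n "\<lambda>_. c"] by simp

lemma SP_zero [simp]: "(\<lambda>_. 0) \<in> SP m n"
  by (simp add: SP_def supp_def)

lemma SP_dx:
  assumes "f \<in> SP m n" shows "dx i f \<in> SP m n"
proof (rule SP_I)
  show "sp_finite (dx i f)" using assms sp_finite_dx SP_imp_sp_finite by blast
  fix x assume x: "dx i f x \<noteq> 0"
  obtain a S where xa: "x = (a,S)" by (cases x)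
  have "f (a(i := a i + 1), S) \<noteq> 0" using x xa by (simp add: dx_def)
  from SP_D[OF assms this] have "\<forall>j\<ge>m. (a(i := a i + 1)) j = 0" "S \<subseteq> {..<2*n}" by auto
  then show "(\<forall>j\<ge>m. fst x j = 0) \<and> snd x \<subseteq> {..<2 * n}"
    using xa by (auto split: if_splits)
qed

lemma SP_dtheta:
  assumes "f \<in> SP m n" shows "dtheta l f \<in> SP m n"
proof (rule SP_I)
  show "sp_finite (dtheta l f)" using assms sp_finite_dtheta SP_imp_sp_finite by blast
  fix x assume x: "dtheta l f x \<noteq> 0"
  obtain a S where xa: "x = (a,S)" by (cases x)
  have "f (a, insert l S) \<noteq> 0" using x xa by (auto simp: dtheta_def split: if_splits)
  then show "(\<forall>j\<ge>m. fst x j = 0) \<and> snd x \<subseteq> {..<2 * n}"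
    using SP_D[OF assms, of "(a, insert l S)"] xa by auto
qed

lemma SP_sp_parity:
  assumes "f \<in> SP m n" shows "sp_parity f \<in> SP m n"
proof (rule SP_I)
  show "sp_finite (sp_parity f)" using assms sp_finite_sp_parity SP_imp_sp_finite by blast
  fix x assume x: "sp_parity f x \<noteq> 0"
  then have "f x \<noteq> 0" by (auto simp: sp_parity_def split: prod.splits)
  then show "(\<forall>j\<ge>m. fst x j = 0) \<and> snd x \<subseteq> {..<2 * n}" using SP_D[OF assms] by blast
qed

lemma SP_sp_lap:
  assumes "f \<in> SP m n" shows "sp_lap m' n' f \<in> SP m n"
proof -
  have "sp_lap m' n' f = (\<lambda>p. (\<Sum>j\<in>{..<n'}. 4 * dtheta (2*j) (dtheta (2*j+1) f) p)
      + (\<Sum>i\<in>{..<m'}. (-1) * dx i (dx i f) p))"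
    by (simp add: sp_lap_def sum_distrib_left sum_negf)
  also have "\<dots> \<in> SP m n"
    by (intro SP_add SP_lincomb) (auto intro!: SP_dtheta SP_dx assms)
  finally show ?thesis .
qed

lemma SP_sp_lap_pow: "f \<in> SP m n \<Longrightarrow> (sp_lap m' n' ^^ k) f \<in> SP m n"
  by (induction k) (auto intro: SP_sp_lap)

lemma dtheta_sp_mult:
  assumes "f \<in> SP m n" "g \<in> SP m n"
  shows "dtheta l (sp_mult f g) =
      (\<lambda>x. sp_mult (dtheta l f) g x + sp_mult (sp_parity f) (dtheta l g) x)"
proof -
  have lhs: "sp_bilinear (\<lambda>f g. dtheta l (sp_mult f g))"
    by (rule sp_bilinear_compose[OF sp_linear_op_dtheta sp_bilinear_sp_mult])
  have rhs: "sp_bilinear (\<lambda>f g x. sp_mult (dtheta l f) g x + sp_mult (sp_parity f) (dtheta l g) x)"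
    using sp_bilinear_add[OF
        sp_bilinear_precompose[OF sp_linear_op_dtheta sp_linear_op_id sp_bilinear_sp_mult]
        sp_bilinear_precompose[OF sp_linear_op_sp_parity sp_linear_op_dtheta sp_bilinear_sp_mult]]
    by simp
  have "dtheta l (sp_mult (sp_monom q) (sp_monom r)) =
      (\<lambda>x. sp_mult (dtheta l (sp_monom q)) (sp_monom r) x
      + sp_mult (sp_parity (sp_monom q)) (dtheta l (sp_monom r)) x)"
    if "finite (snd q)" "finite (snd r)" for q r
    using that dtheta_sp_mult_monom by (cases q, cases r) simp
  then show ?thesis
    using sp_bilinear_eqI[OF lhs rhs, of "\<lambda>p. finite (snd p)" f g] assms
      SP_imp_sp_finite SP_finite_snd by auto
qed

lemma dx_sp_mult:
  assumes "sp_finite f" "sp_finite g"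
  shows "dx i (sp_mult f g) = (\<lambda>x. sp_mult (dx i f) g x + sp_mult f (dx i g) x)"
proof -
  have lhs: "sp_bilinear (\<lambda>f g. dx i (sp_mult f g))"
    by (rule sp_bilinear_compose[OF sp_linear_op_dx sp_bilinear_sp_mult])
  have rhs: "sp_bilinear (\<lambda>f g x. sp_mult (dx i f) g x + sp_mult f (dx i g) x)"
    using sp_bilinear_add[OF
        sp_bilinear_precompose[OF sp_linear_op_dx sp_linear_op_id sp_bilinear_sp_mult]
        sp_bilinear_precompose[OF sp_linear_op_id sp_linear_op_dx sp_bilinear_sp_mult]]
    by simp
  have "dx i (sp_mult (sp_monom q) (sp_monom r)) =
      (\<lambda>x. sp_mult (dx i (sp_monom q)) (sp_monom r) x + sp_mult (sp_monom q) (dx i (sp_monom r)) x)"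
    for q r
    using dx_sp_mult_monom by (cases q, cases r) simp
  then show ?thesis
    using sp_bilinear_eqI[OF lhs rhs, of "\<lambda>_. True" f g] assms by auto
qed

lemma dtheta_dtheta_sp_mult:
  assumes f: "f \<in> SP m n" and g: "g \<in> SP m n"
  shows "dtheta a (dtheta b (sp_mult f g)) =
    (\<lambda>x. sp_mult (dtheta a (dtheta b f)) g x + sp_mult (sp_parity (dtheta b f)) (dtheta a g) x
       + sp_mult (dtheta a (sp_parity f)) (dtheta b g) x + sp_mult f (dtheta a (dtheta b g)) x)"
proof -
  have "dtheta a (dtheta b (sp_mult f g)) =
      (\<lambda>x. dtheta a (sp_mult (dtheta b f) g) x + dtheta a (sp_mult (sp_parity f) (dtheta b g)) x)"
    by (simp add: dtheta_sp_mult[OF f g] dtheta_add)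
  also have "\<dots> =
      (\<lambda>x. sp_mult (dtheta a (dtheta b f)) g x + sp_mult (sp_parity (dtheta b f)) (dtheta a g) x
       + (sp_mult (dtheta a (sp_parity f)) (dtheta b g) x
          + sp_mult (sp_parity (sp_parity f)) (dtheta a (dtheta b g)) x))"
    using dtheta_sp_mult[OF SP_dtheta[OF f] g, of a b]
      dtheta_sp_mult[OF SP_sp_parity[OF f] SP_dtheta[OF g], of a b] by simp
  finally show ?thesis by (simp add: add.assoc)
qed

lemma dx_dx_sp_mult:
  assumes f: "sp_finite f" and g: "sp_finite g"
  shows "dx i (dx i (sp_mult f g)) =
    (\<lambda>x. sp_mult (dx i (dx i f)) g x + 2 * sp_mult (dx i f) (dx i g) x + sp_mult f (dx i (dx i g)) x)"
proof -
  have "dx i (dx i (sp_mult f g)) = (\<lambda>x. dx i (sp_mult (dx i f) g) x + dx i (sp_mult f (dx i g)) x)"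
    by (simp add: dx_sp_mult[OF f g] dx_add)
  also have "\<dots> = (\<lambda>x. sp_mult (dx i (dx i f)) g x + sp_mult (dx i f) (dx i g) x
     + (sp_mult (dx i f) (dx i g) x + sp_mult f (dx i (dx i g)) x))"
    using dx_sp_mult[OF sp_finite_dx[OF f] g, of i] dx_sp_mult[OF f sp_finite_dx[OF g], of i]
      by simp
  finally show ?thesis by (simp add: fun_eq_iff algebra_simps)
qed

definition lap_cross :: "nat \<Rightarrow> nat \<Rightarrow> spoly \<Rightarrow> spoly \<Rightarrow> spoly" where
  "lap_cross m n f g = (\<lambda>x.
      4 * (\<Sum>j<n. sp_mult (sp_parity (dtheta (2*j+1) f)) (dtheta (2*j) g) x
                 + sp_mult (dtheta (2*j) (sp_parity f)) (dtheta (2*j+1) g) x)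
      - 2 * (\<Sum>i<m. sp_mult (dx i f) (dx i g) x))"

lemma sp_lap_sp_mult:
  assumes f: "f \<in> SP m n" and g: "g \<in> SP m n"
  shows "sp_lap m n (sp_mult f g) =
    (\<lambda>x. sp_mult (sp_lap m n f) g x + sp_mult f (sp_lap m n g) x + lap_cross m n f g x)"
proof -
  have fin: "sp_finite f" "sp_finite g" using f g SP_imp_sp_finite by auto
  let ?T = "\<lambda>h x. \<Sum>j<n. 4 * dtheta (2*j) (dtheta (2*j+1) h) x"
  let ?X = "\<lambda>h x. \<Sum>i<m. dx i (dx i h) x"
  have lap_eq: "sp_lap m n h = (\<lambda>x. ?T h x - ?X h x)" for h
    by (simp add: sp_lap_def sum_distrib_left)
  have fin2: "sp_finite (?T h)" "sp_finite (?X h)" if "sp_finite h" for h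
    using sp_finite_lincomb[of "{..<n}" "\<lambda>j. dtheta (2*j) (dtheta (2*j+1) h)" "\<lambda>_. 4"]
      sp_finite_lincomb[of "{..<m}" "\<lambda>i. dx i (dx i h)" "\<lambda>_. 1"] that
    by (auto simp: sp_finite_dtheta sp_finite_dx)
  have "sp_mult (sp_lap m n f) g = (\<lambda>x. sp_mult (?T f) g x - sp_mult (?X f) g x)"
    unfolding lap_eq[of f] by (rule sp_mult_diff_left[OF fin2[OF fin(1)] fin(2)])
  also have "\<dots> = (\<lambda>x. (\<Sum>j<n. 4 * sp_mult (dtheta (2*j) (dtheta (2*j+1) f)) g x)
      - (\<Sum>i<m. sp_mult (dx i (dx i f)) g x))"
    using fin by (simp add: sp_mult_lincomb_left sp_mult_sum_left sp_finite_dtheta sp_finite_dx)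
  finally have left: "sp_mult (sp_lap m n f) g = \<dots>" .
  have "sp_mult f (sp_lap m n g) = (\<lambda>x. sp_mult f (?T g) x - sp_mult f (?X g) x)"
    unfolding lap_eq[of g] by (rule sp_mult_diff_right[OF fin2[OF fin(2)] fin(1)])
  also have "\<dots> = (\<lambda>x. (\<Sum>j<n. 4 * sp_mult f (dtheta (2*j) (dtheta (2*j+1) g)) x)
      - (\<Sum>i<m. sp_mult f (dx i (dx i g)) x))"
    using fin by (simp add: sp_mult_lincomb_right sp_mult_sum_right sp_finite_dtheta sp_finite_dx)
  finally have right: "sp_mult f (sp_lap m n g) = \<dots>" .
  show ?thesis
    unfolding sp_lap_def[of m n "sp_mult f g"] left right lap_cross_def
    by (simp add: dtheta_dtheta_sp_mult[OF f g] dx_dx_sp_mult[OF fin] fun_eq_iff sum.distrib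
        sum_distrib_left sum_subtractf sum_negf algebra_simps)
qed

section \<open>Commutation relations\<close>

lemma card_below_insert:
  assumes "finite U" "a \<notin> U"
  shows "card {s \<in> insert a U. s < b} = card {s\<in>U. s < b} + (if a < b then 1 else 0)"
proof (cases "a < b")
  case True
  then have "{s \<in> insert a U. s < b} = insert a {s\<in>U. s < b}" by auto
  then show ?thesis using assms True by simp
next
  case False
  then have "{s \<in> insert a U. s < b} = {s\<in>U. s < b}" by auto
  then show ?thesis using False by simp
qed

lemma dtheta_anticommute:
  assumes f: "f \<in> SP m n"
  shows "dtheta a (dtheta b f) = (\<lambda>x. - dtheta b (dtheta a f) x)"
proof
  fix x :: monomial
  obtain c U where x: "x = (c,U)" by (cases x)
  show "dtheta a (dtheta b f) x = - dtheta b (dtheta a f) x"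
  proof (cases "a = b \<or> a \<in> U \<or> b \<in> U")
    case True
    then show ?thesis by (auto simp: dtheta_def x)
  next
    case False
    then have ab: "a \<noteq> b" "a \<notin> U" "b \<notin> U" by auto
    have ins: "insert b (insert a U) = insert a (insert b U)" by auto
    show ?thesis
    proof (cases "finite U")
      case False
      then have "f (c, insert a (insert b U)) = 0" using SP_infinite_zero[OF f] by simp
      then show ?thesis using ab ins by (simp add: dtheta_def x)
    next
      case True
      have c1: "card {s \<in> insert a U. s < b} = card {s\<in>U. s < b} + (if a < b then 1 else 0)"
        using card_below_insert True ab by blast
      have c2: "card {s \<in> insert b U. s < a} = card {s\<in>U. s < a} + (if b < a then 1 else 0)"
        using card_below_insert True ab by blast
      show ?thesis using ab ins c1 c2 by (auto simp: dtheta_def x power_add)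
    qed
  qed
qed

lemma dx_dtheta_commute: "dx i (dtheta l f) = dtheta l (dx i f)"
  by (auto simp: dx_def dtheta_def fun_eq_iff)

lemma dx_commute: "dx i (dx j f) = dx j (dx i f)"
proof (cases "i = j")
  case True then show ?thesis by simp
next
  case False
  then show ?thesis by (auto simp: dx_def fun_eq_iff fun_upd_twist)
qed

lemma sp_parity_dtheta:
  assumes f: "f \<in> SP m n"
  shows "sp_parity (dtheta l f) = (\<lambda>x. - dtheta l (sp_parity f) x)"
proof
  fix x :: monomial
  obtain c U where x: "x = (c,U)" by (cases x)
  show "sp_parity (dtheta l f) x = - dtheta l (sp_parity f) x"
  proof (cases "finite U")
    case False
    then have "f (c, insert l U) = 0" using SP_infinite_zero[OF f] by simp
    then show ?thesis by (simp add: dtheta_def sp_parity_def x)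
  next
    case True
    then show ?thesis by (auto simp: dtheta_def sp_parity_def x)
  qed
qed

lemma sp_parity_dx: "sp_parity (dx i f) = dx i (sp_parity f)"
  by (auto simp: dx_def sp_parity_def fun_eq_iff)

lemma dtheta_minus: "dtheta l (\<lambda>x. - f x) = (\<lambda>x. - dtheta l f x)"
  by (auto simp: dtheta_def fun_eq_iff)

lemma sp_parity_minus: "sp_parity (\<lambda>x. - f x) = (\<lambda>x. - sp_parity f x)"
  by (auto simp: sp_parity_def fun_eq_iff)

lemma dtheta_commute_dtheta_dtheta:
  assumes f: "f \<in> SP m n"
  shows "dtheta l (dtheta a (dtheta b f)) = dtheta a (dtheta b (dtheta l f))"
proof -
  have "dtheta l (dtheta a (dtheta b f)) = (\<lambda>x. - dtheta a (dtheta l (dtheta b f)) x)"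
    by (rule dtheta_anticommute[OF SP_dtheta[OF f]])
  also have "\<dots> = dtheta a (dtheta b (dtheta l f))"
    by (simp only: dtheta_anticommute[OF f, of l b] dtheta_minus minus_minus)
  finally show ?thesis .
qed

lemma sp_parity_dtheta_dtheta:
  assumes f: "f \<in> SP m n"
  shows "sp_parity (dtheta a (dtheta b f)) = dtheta a (dtheta b (sp_parity f))"
proof -
  have "sp_parity (dtheta a (dtheta b f)) = (\<lambda>x. - dtheta a (sp_parity (dtheta b f)) x)"
    by (rule sp_parity_dtheta[OF SP_dtheta[OF f]])
  also have "\<dots> = dtheta a (dtheta b (sp_parity f))"
    by (simp only: sp_parity_dtheta[OF f, of b] dtheta_minus minus_minus)
  finally show ?thesis .
qed

lemma sp_lap_dtheta:
  assumes f: "f \<in> SP m n"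
  shows "sp_lap m n (dtheta l f) = dtheta l (sp_lap m n f)"
proof -
  have "dtheta l (sp_lap m n f) =
      (\<lambda>p. 4 * (\<Sum>j<n. dtheta l (dtheta (2*j) (dtheta (2*j+1) f)) p)
         - (\<Sum>i<m. dtheta l (dx i (dx i f)) p))"
    unfolding sp_lap_def by (simp add: dtheta_diff dtheta_scale dtheta_sum)
  also have "\<dots> =
      (\<lambda>p. 4 * (\<Sum>j<n. dtheta (2*j) (dtheta (2*j+1) (dtheta l f)) p)
         - (\<Sum>i<m. dx i (dx i (dtheta l f)) p))"
    by (simp only: dtheta_commute_dtheta_dtheta[OF f, of l] dx_dtheta_commute)
  also have "\<dots> = sp_lap m n (dtheta l f)"
    unfolding sp_lap_def ..
  finally show ?thesis by simp
qed

lemma sp_lap_dx: "sp_lap m n (dx i f) = dx i (sp_lap m n f)"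
proof -
  have "dx i (sp_lap m n f) =
      (\<lambda>p. 4 * (\<Sum>j<n. dx i (dtheta (2*j) (dtheta (2*j+1) f)) p) - (\<Sum>k<m. dx i (dx k (dx k f)) p))"
    unfolding sp_lap_def by (simp add: dx_diff dx_scale dx_sum)
  also have "\<dots> =
      (\<lambda>p. 4 * (\<Sum>j<n. dtheta (2*j) (dtheta (2*j+1) (dx i f)) p) - (\<Sum>k<m. dx k (dx k (dx i f)) p))"
  proof -
    have "\<And>k. dx i (dx k (dx k f)) = dx k (dx k (dx i f))"
      by (metis dx_commute[of i])
    then show ?thesis by (simp only: dx_dtheta_commute)
  qed
  also have "\<dots> = sp_lap m n (dx i f)"
    unfolding sp_lap_def ..
  finally show ?thesis by simp
qed

lemma sp_lap_sp_parity:
  assumes f: "f \<in> SP m n"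
  shows "sp_lap m n (sp_parity f) = sp_parity (sp_lap m n f)"
proof -
  have "sp_parity (sp_lap m n f) =
      (\<lambda>p. 4 * (\<Sum>j<n. sp_parity (dtheta (2*j) (dtheta (2*j+1) f)) p)
         - (\<Sum>i<m. sp_parity (dx i (dx i f)) p))"
    unfolding sp_lap_def by (simp add: sp_parity_diff sp_parity_scale sp_parity_sum)
  also have "\<dots> =
      (\<lambda>p. 4 * (\<Sum>j<n. dtheta (2*j) (dtheta (2*j+1) (sp_parity f)) p)
         - (\<Sum>i<m. dx i (dx i (sp_parity f)) p))"
    by (simp only: sp_parity_dtheta_dtheta[OF f] sp_parity_dx)
  also have "\<dots> = sp_lap m n (sp_parity f)"
    unfolding sp_lap_def ..
  finally show ?thesis by simp
qed

definition monom_deg :: "nat \<Rightarrow> monomial \<Rightarrow> nat" where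
  "monom_deg m p = (\<Sum>i<m. fst p i) + card (snd p)"

lemma homogeneous_iff: "homogeneous m k f \<longleftrightarrow> (\<forall>p. f p \<noteq> 0 \<longrightarrow> monom_deg m p = k)"
  unfolding homogeneous_def monom_deg_def supp_def by blast

lemma homogeneousD: "homogeneous m k f \<Longrightarrow> f p \<noteq> 0 \<Longrightarrow> monom_deg m p = k"
  unfolding homogeneous_iff by blast

lemma homogeneousI: "(\<And>p. f p \<noteq> 0 \<Longrightarrow> monom_deg m p = k) \<Longrightarrow> homogeneous m k f"
  unfolding homogeneous_iff by blast

lemma homogeneous_shift:
  assumes "\<And>p. f p \<noteq> 0 \<Longrightarrow> monom_deg m p + d = k"
  shows "homogeneous m (k - d) f \<and> (k < d \<longrightarrow> f = (\<lambda>_. 0))"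
proof
  show "homogeneous m (k - d) f" by (rule homogeneousI) (use assms in force)
  show "k < d \<longrightarrow> f = (\<lambda>_. 0)"
  proof (intro impI ext)
    fix p assume "k < d"
    then show "f p = 0" using assms[of p] by linarith
  qed
qed

lemma monom_deg_dx:
  assumes "homogeneous m k f" "i < m" "dx i f p \<noteq> 0"
  shows "monom_deg m p + 1 = k"
proof -
  obtain a S where p: "p = (a,S)" by (cases p)
  have "f (a(i := a i + 1), S) \<noteq> 0" using assms(3) by (simp add: dx_def p)
  then have "monom_deg m (a(i := a i + 1), S) = k" using homogeneousD[OF assms(1)] by blast
  then show ?thesis using sum_fun_upd_Suc[OF assms(2), of a] by (simp add: monom_deg_def p)
qed

lemma monom_deg_dtheta:
  assumes "homogeneous m k f" "f \<in> SP m n" "dtheta l f p \<noteq> 0"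
  shows "monom_deg m p + 1 = k"
proof -
  obtain a S where p: "p = (a,S)" by (cases p)
  have lS: "l \<notin> S" and nz: "f (a, insert l S) \<noteq> 0"
    using assms(3) by (auto simp: dtheta_def p split: if_splits)
  then have "monom_deg m (a, insert l S) = k" using homogeneousD[OF assms(1)] by blast
  moreover have "finite S" using SP_infinite_zero[OF assms(2)] nz by (metis finite_insert)
  ultimately show ?thesis using lS by (simp add: monom_deg_def p)
qed

lemma homogeneous_dx:
  "homogeneous m k f \<Longrightarrow> i < m \<Longrightarrow>
    homogeneous m (k - 1) (dx i f) \<and> (k = 0 \<longrightarrow> dx i f = (\<lambda>_. 0))"
  using homogeneous_shift[of "dx i f" m 1 k] monom_deg_dx by simp

lemma homogeneous_dtheta:
  "homogeneous m k f \<Longrightarrow> f \<in> SP m n \<Longrightarrow>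
    homogeneous m (k - 1) (dtheta l f) \<and> (k = 0 \<longrightarrow> dtheta l f = (\<lambda>_. 0))"
  using homogeneous_shift[of "dtheta l f" m 1 k] monom_deg_dtheta by simp

lemma homogeneous_sp_parity: "homogeneous m k f \<Longrightarrow> homogeneous m k (sp_parity f)"
  by (rule homogeneousI, erule homogeneousD) (auto simp: sp_parity_def split: prod.splits)

lemma monom_deg_sp_lap:
  assumes hf: "homogeneous m k f" and f: "f \<in> SP m n" and p: "sp_lap m n f p \<noteq> 0"
  shows "monom_deg m p + 2 = k"
proof -
  have theta: "monom_deg m p + 2 = k" if "dtheta a (dtheta b f) p \<noteq> 0" for a b
  proof -
    have "dtheta b f \<noteq> (\<lambda>_. 0)" using that by auto
    then have "k \<noteq> 0" "homogeneous m (k - 1) (dtheta b f)" using homogeneous_dtheta[OF hf f] by auto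
    then show ?thesis using monom_deg_dtheta[OF _ SP_dtheta[OF f] that] by fastforce
  qed
  have x: "monom_deg m p + 2 = k" if "i < m" "dx i (dx i f) p \<noteq> 0" for i
  proof -
    have "dx i f \<noteq> (\<lambda>_. 0)" using that by auto
    then have "k \<noteq> 0" "homogeneous m (k - 1) (dx i f)" using homogeneous_dx[OF hf that(1)] by auto
    then show ?thesis using monom_deg_dx[OF _ that] by fastforce
  qed
  have "(\<exists>j<n. dtheta (2*j) (dtheta (2*j+1) f) p \<noteq> 0) \<or> (\<exists>i<m. dx i (dx i f) p \<noteq> 0)"
    using p by (rule contrapos_np) (simp add: sp_lap_def)
  then show ?thesis using theta x by blast
qed

lemma homogeneous_sp_lap:
  "homogeneous m k f \<Longrightarrow> f \<in> SP m n \<Longrightarrow>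
    homogeneous m (k - 2) (sp_lap m n f) \<and> (k < 2 \<longrightarrow> sp_lap m n f = (\<lambda>_. 0))"
  by (rule homogeneous_shift) (rule monom_deg_sp_lap)

lemma homogeneous_sp_lap_pow:
  "homogeneous m k f \<Longrightarrow> f \<in> SP m n \<Longrightarrow>
    homogeneous m (k - 2*j) ((sp_lap m n ^^ j) f) \<and> (k < 2*j \<longrightarrow> (sp_lap m n ^^ j) f = (\<lambda>_. 0))"
proof (induction j)
  case (Suc j)
  then have "homogeneous m (k - 2*j) ((sp_lap m n ^^ j) f)"
    and zero: "k < 2*j \<longrightarrow> (sp_lap m n ^^ j) f = (\<lambda>_. 0)" by auto
  from homogeneous_sp_lap[OF this(1) SP_sp_lap_pow[OF Suc.prems(2)]]
  have "homogeneous m (k - 2 * Suc j) ((sp_lap m n ^^ Suc j) f)"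
    and "k - 2*j < 2 \<longrightarrow> (sp_lap m n ^^ Suc j) f = (\<lambda>_. 0)" by (simp_all add: diff_diff_left)
  with zero show ?case by auto
qed simp

lemma eval0_homogeneous: "homogeneous m k f \<Longrightarrow> 0 < k \<Longrightarrow> eval0 f = 0"
  unfolding eval0_def using homogeneousD[of m k f "(\<lambda>_. 0, {})"] by (force simp: monom_deg_def)

lemma homogeneous_lincomb:
  assumes "\<And>i. i \<in> I \<Longrightarrow> homogeneous m k (u i)"
  shows "homogeneous m k (\<lambda>x. \<Sum>i\<in>I. c i * u i x)"
proof (rule homogeneousI)
  fix p assume "(\<Sum>i\<in>I. c i * u i p) \<noteq> 0"
  then obtain i where "i \<in> I" "c i * u i p \<noteq> 0" by (meson sum.neutral)
  then show "monom_deg m p = k" using assms homogeneousD by fastforce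
qed

lemma homogeneous_add:
  "homogeneous m k f \<Longrightarrow> homogeneous m k g \<Longrightarrow> homogeneous m k (\<lambda>x. f x + g x)"
  using homogeneous_lincomb[of "{True,False}" m k "\<lambda>b. if b then f else g" "\<lambda>_. 1"] by simp

lemma homogeneous_scale: "homogeneous m k f \<Longrightarrow> homogeneous m k (\<lambda>x. c * f x)"
  using homogeneous_lincomb[of "{()}" m k "\<lambda>_. f" "\<lambda>_. c"] by simp

lemma homogeneous_sum:
  "(\<And>i. i \<in> I \<Longrightarrow> homogeneous m k (u i)) \<Longrightarrow> homogeneous m k (\<lambda>x. \<Sum>i\<in>I. u i x)"
  using homogeneous_lincomb[of I m k u "\<lambda>_. 1"] by simp

lemma homogeneous_sum_neg:
  "(\<And>i. i \<in> I \<Longrightarrow> homogeneous m k (u i)) \<Longrightarrow> homogeneous m k (\<lambda>x. \<Sum>i\<in>I. - u i x)"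
  using homogeneous_lincomb[of I m k u "\<lambda>_. -1"] by simp

lemma homogeneous_sp_mult:
  assumes hf: "homogeneous m k f" and hg: "homogeneous m l g"
    and f: "f \<in> SP m n" and g: "g \<in> SP m n"
  shows "homogeneous m (k + l) (sp_mult f g)"
proof (rule homogeneousI)
  fix x assume "sp_mult f g x \<noteq> 0"
  then obtain p q where pq: "f p \<noteq> 0" "g q \<noteq> 0" "fst x = (\<lambda>i. fst p i + fst q i)"
      "snd p \<inter> snd q = {}" "snd x = snd p \<union> snd q"
    using supp_sp_mult[OF SP_imp_sp_finite[OF f] SP_imp_sp_finite[OF g]] by blast
  have "finite (snd p)" "finite (snd q)" using SP_finite_snd f g pq by auto
  then have "card (snd x) = card (snd p) + card (snd q)" using pq by (simp add: card_Un_disjoint)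
  moreover have "monom_deg m p = k" "monom_deg m q = l"
    using homogeneousD[OF hf] homogeneousD[OF hg] pq by auto
  ultimately show "monom_deg m x = k + l" using pq by (simp add: monom_deg_def sum.distrib)
qed

section \<open>Laplacians of products with a harmonic factor\<close>

definition sp_harmonic :: "nat \<Rightarrow> nat \<Rightarrow> spoly \<Rightarrow> bool" where
  "sp_harmonic m n b \<longleftrightarrow> b \<in> SP m n \<and> sp_lap m n b = (\<lambda>_. 0)"

lemma sp_harmonic_dtheta: "sp_harmonic m n b \<Longrightarrow> sp_harmonic m n (dtheta l b)"
  unfolding sp_harmonic_def using sp_lap_dtheta SP_dtheta by simp

lemma sp_harmonic_sp_parity: "sp_harmonic m n b \<Longrightarrow> sp_harmonic m n (sp_parity b)"
  unfolding sp_harmonic_def using sp_lap_sp_parity SP_sp_parity by simp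

lemma sp_harmonic_dx: "sp_harmonic m n b \<Longrightarrow> sp_harmonic m n (dx i b)"
  unfolding sp_harmonic_def using sp_lap_dx SP_dx by simp

lemma sp_lap_pow_lap_cross:
  "(sp_lap m n ^^ k) (\<lambda>x. A x + B x + lap_cross m n f g x) =
   (\<lambda>x. (sp_lap m n ^^ k) A x + (sp_lap m n ^^ k) B x +
      (4 * (\<Sum>j<n. (sp_lap m n ^^ k) (sp_mult (sp_parity (dtheta (2*j+1) f)) (dtheta (2*j) g)) x
                 + (sp_lap m n ^^ k) (sp_mult (dtheta (2*j) (sp_parity f)) (dtheta (2*j+1) g)) x)
       - 2 * (\<Sum>i<m. (sp_lap m n ^^ k) (sp_mult (dx i f) (dx i g)) x)))"
  unfolding lap_cross_def
  by (simp add: sp_lap_pow_add sp_lap_pow_diff sp_lap_pow_scale sp_lap_pow_sum)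

text \<open>Each application of \<open>\<Delta>\<close> either falls on \<open>a\<close> or produces products of first
  derivatives of \<open>a\<close> and \<open>b\<close>; derivatives of \<open>b\<close> stay harmonic while \<open>a\<close> loses degree.\<close>
lemma sp_lap_pow_mult_harmonic:
  assumes "a \<in> SP m n" "homogeneous m k a" "k < j" "sp_harmonic m n b"
  shows "(sp_lap m n ^^ j) (sp_mult a b) = (\<lambda>_. 0) \<and> (sp_lap m n ^^ j) (sp_mult b a) = (\<lambda>_. 0)"
  using assms
proof (induction j arbitrary: k a b)
  case 0
  then show ?case by simp
next
  case (Suc j)
  note a = Suc.prems(1) and ha = Suc.prems(2) and hb = Suc.prems(4)
  have b: "b \<in> SP m n" and lb: "sp_lap m n b = (\<lambda>_. 0)" using hb by (auto simp: sp_harmonic_def)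
  let ?L = "sp_lap m n ^^ j"
  have lower: "?L (sp_mult a' b') = (\<lambda>_. 0) \<and> ?L (sp_mult b' a') = (\<lambda>_. 0)"
    if "a' \<in> SP m n" "homogeneous m (k - d) a'" "k < d \<longrightarrow> a' = (\<lambda>_. 0)" "0 < d"
      "sp_harmonic m n b'" for a' b' d
    using that Suc.IH[of a' "k - d" b'] Suc.prems(3) by (cases "k < d") auto
  have lap_a: "?L (sp_mult (sp_lap m n a) b') = (\<lambda>_. 0) \<and> ?L (sp_mult b' (sp_lap m n a)) = (\<lambda>_. 0)"
    if "sp_harmonic m n b'" for b'
    using lower[OF SP_sp_lap[OF a] _ _ _ that, of 2] homogeneous_sp_lap[OF ha a] by simp
  have dtheta_a: "?L (sp_mult (dtheta l a) b') = (\<lambda>_. 0) \<and> ?L (sp_mult b' (dtheta l a)) = (\<lambda>_. 0)"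
    if "sp_harmonic m n b'" for b' l
    using lower[OF SP_dtheta[OF a] _ _ _ that, of 1] homogeneous_dtheta[OF ha a] by simp
  have parity_dtheta_a: "?L (sp_mult (sp_parity (dtheta l a)) b') = (\<lambda>_. 0)"
    if "sp_harmonic m n b'" for b' l
    using lower[OF SP_sp_parity[OF SP_dtheta[OF a]] _ _ _ that, of 1]
      homogeneous_dtheta[OF ha a] homogeneous_sp_parity by fastforce
  have dtheta_parity_a: "?L (sp_mult (dtheta l (sp_parity a)) b') = (\<lambda>_. 0)"
    if "sp_harmonic m n b'" for b' l
    using lower[OF SP_dtheta[OF SP_sp_parity[OF a]] _ _ _ that, of 1]
      homogeneous_dtheta[OF homogeneous_sp_parity[OF ha] SP_sp_parity[OF a]] by simp
  have dx_a: "?L (sp_mult (dx i a) b') = (\<lambda>_. 0) \<and> ?L (sp_mult b' (dx i a)) = (\<lambda>_. 0)"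
    if "sp_harmonic m n b'" "i < m" for b' i
    using lower[OF SP_dx[OF a] _ _ _ that(1), of 1] homogeneous_dx[OF ha that(2)] by simp
  have "(sp_lap m n ^^ Suc j) (sp_mult a b)
      = ?L (\<lambda>x. sp_mult (sp_lap m n a) b x + sp_mult a (sp_lap m n b) x + lap_cross m n a b x)"
    unfolding funpow_Suc_right comp_def by (simp add: sp_lap_sp_mult[OF a b])
  also have "\<dots> = (\<lambda>_. 0)"
    unfolding sp_lap_pow_lap_cross
    using lap_a[OF hb] parity_dtheta_a[OF sp_harmonic_dtheta[OF hb]]
      dtheta_parity_a[OF sp_harmonic_dtheta[OF hb]] dx_a[OF sp_harmonic_dx[OF hb]] lb
    by simp
  moreover have "(sp_lap m n ^^ Suc j) (sp_mult b a)
      = ?L (\<lambda>x. sp_mult (sp_lap m n b) a x + sp_mult b (sp_lap m n a) x + lap_cross m n b a x)"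
    unfolding funpow_Suc_right comp_def by (simp add: sp_lap_sp_mult[OF b a])
  moreover have "\<dots> = (\<lambda>_. 0)"
    unfolding sp_lap_pow_lap_cross
    using lap_a[OF hb] dtheta_a[OF sp_harmonic_sp_parity[OF sp_harmonic_dtheta[OF hb]]]
      dtheta_a[OF sp_harmonic_dtheta[OF sp_harmonic_sp_parity[OF hb]]] dx_a[OF sp_harmonic_dx[OF hb]] lb
    by simp
  ultimately show ?case by simp
qed

section \<open>Multiplication by \<open>x\<^sup>2\<close>\<close>

definition unit_exp :: "nat \<Rightarrow> nat \<Rightarrow> nat" where
  "unit_exp i = (\<lambda>k. if k = i then 1 else 0)"

definition double_unit_exp :: "nat \<Rightarrow> nat \<Rightarrow> nat" where
  "double_unit_exp i = (\<lambda>k. if k = i then 2 else 0)"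

lemma tvar_eq_monom: "tvar l = sp_monom (\<lambda>_. 0, {l})"
  by (auto simp: tvar_def sp_monom_def fun_eq_iff)

lemma xvar_eq_monom: "xvar i = sp_monom (unit_exp i, {})"
  by (auto simp: xvar_def sp_monom_def fun_eq_iff unit_exp_def)

lemma sp_one_eq_monom: "sp_one = sp_monom (\<lambda>_. 0, {})"
  by (auto simp: sp_one_def sp_monom_def fun_eq_iff)

lemma sp_finite_xvar [simp]: "sp_finite (xvar i)"
  by (simp add: xvar_eq_monom)

lemma sp_finite_tvar [simp]: "sp_finite (tvar i)"
  by (simp add: tvar_eq_monom)

lemma sp_finite_sp_one [simp]: "sp_finite sp_one"
  by (simp add: sp_one_eq_monom)

lemma SP_sp_monom:
  "(\<forall>i\<ge>m. fst q i = 0) \<Longrightarrow> snd q \<subseteq> {..<2*n} \<Longrightarrow> sp_monom q \<in> SP m n"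
  by (auto simp: SP_def supp_sp_monom)

lemma SP_sp_one [simp]: "sp_one \<in> SP m n"
  by (simp add: sp_one_eq_monom SP_sp_monom)

lemma sp_mult_one_left:
  assumes g: "sp_finite g" shows "sp_mult sp_one g = g"
proof -
  have e: "g = (\<lambda>x. \<Sum>p\<in>supp g. g p * sp_monom p x)" by (rule sp_monom_expansion) fact
  have "sp_mult sp_one g = sp_mult sp_one (\<lambda>x. \<Sum>p\<in>supp g. g p * sp_monom p x)"
    using arg_cong[OF e] .
  also have "\<dots> = (\<lambda>x. \<Sum>p\<in>supp g. g p * sp_mult sp_one (sp_monom p) x)"
    by (rule sp_mult_lincomb_right)
      (use g in \<open>auto simp: sp_finite_def supp_sp_monom sp_one_eq_monom\<close>)
  also have "\<dots> = (\<lambda>x. \<Sum>p\<in>supp g. g p * sp_monom p x)"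
  proof (intro ext sum.cong refl)
    fix x and p :: monomial
    obtain a S where pa: "p = (a,S)" by (cases p)
    show "g p * sp_mult sp_one (sp_monom p) x = g p * sp_monom p x"
      by (simp add: pa sp_one_eq_monom sp_mult_monom)
  qed
  finally show ?thesis using e by simp
qed

lemma homogeneous_sp_monom: "homogeneous m (monom_deg m q) (sp_monom q)"
  by (rule homogeneousI) (auto simp: sp_monom_def split: if_splits)

lemma sp_xsq_eq:
  "sp_xsq m n = (\<lambda>x. (\<Sum>j<n. sp_monom (\<lambda>_. 0, {2*j, 2*j+1}) x)
      - (\<Sum>i<m. sp_monom (double_unit_exp i, {}) x))"
proof -
  have a: "sp_mult (tvar (2*j)) (tvar (2*j+1)) = sp_monom (\<lambda>_. 0, {2*j, 2*j+1})" for j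
    using perm_sign_consecutive[of "2*j"]
    by (simp add: tvar_eq_monom sp_mult_monom monom_mult_sign_def fun_eq_iff insert_commute)
  have b: "sp_mult (xvar i) (xvar i) = sp_monom (double_unit_exp i, {})" for i
  proof -
    have "(\<lambda>k. unit_exp i k + unit_exp i k) = double_unit_exp i"
      by (auto simp: unit_exp_def double_unit_exp_def)
    then show ?thesis by (simp add: xvar_eq_monom sp_mult_monom monom_mult_sign_def fun_eq_iff)
  qed
  show ?thesis unfolding sp_xsq_def a b ..
qed

lemma dtheta_odd_sp_xsq:
  assumes j0: "j0 < n"
  shows "dtheta (2*j0+1) (sp_xsq m n) = (\<lambda>x. - tvar (2*j0) x)"
proof -
  have "{s \<in> {2*j0, 2*j0+1}. s < 2*j0+1} = {2*j0}" by auto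
  then have below: "card_below {2*j0, 2*j0+1} (2*j0+1) = 1" by (simp add: card_below_def)
  have sign: "dtheta_sign (2*j0+1) {2*j, 2*j+1} = (if j = j0 then -1 else 0)" for j
    using below by (cases "j = j0") (auto simp: dtheta_sign_def)
  have "dtheta (2*j0+1) (sp_xsq m n) =
      (\<lambda>x. \<Sum>j<n. dtheta_sign (2*j0+1) {2*j, 2*j+1} * sp_monom (\<lambda>_. 0, {2*j, 2*j+1} - {2*j0+1}) x)"
    by (simp add: sp_xsq_eq dtheta_diff dtheta_sum dtheta_monom dtheta_sign_def[of _ "{}"])
  also have "\<dots> = (\<lambda>x. - sp_monom (\<lambda>_. 0, {2*j0, 2*j0+1} - {2*j0+1}) x)"
    by (subst sum_eq_single[of _ j0]) (use j0 sign in auto)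
  also have "{2*j0, 2*j0+1} - {2*j0+1} = {2*j0}" by auto
  finally show ?thesis by (simp add: tvar_eq_monom)
qed

lemma dtheta_even_sp_xsq:
  assumes j0: "j0 < n"
  shows "dtheta (2*j0) (sp_xsq m n) = tvar (2*j0+1)"
proof -
  have "{s \<in> {2*j0, 2*j0+1}. s < 2*j0} = {}" by auto
  then have below: "card_below {2*j0, 2*j0+1} (2*j0) = 0" by (simp add: card_below_def)
  have sign: "dtheta_sign (2*j0) {2*j, 2*j+1} = (if j = j0 then 1 else 0)" for j
    using below by (cases "j = j0") (auto simp: dtheta_sign_def)
  have "dtheta (2*j0) (sp_xsq m n) =
      (\<lambda>x. \<Sum>j<n. dtheta_sign (2*j0) {2*j, 2*j+1} * sp_monom (\<lambda>_. 0, {2*j, 2*j+1} - {2*j0}) x)"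
    by (simp add: sp_xsq_eq dtheta_diff dtheta_sum dtheta_monom dtheta_sign_def[of _ "{}"])
  also have "\<dots> = (\<lambda>x. sp_monom (\<lambda>_. 0, {2*j0, 2*j0+1} - {2*j0}) x)"
    by (subst sum_eq_single[of _ j0]) (use j0 sign in auto)
  also have "{2*j0, 2*j0+1} - {2*j0} = {2*j0+1}" by auto
  finally show ?thesis by (simp add: tvar_eq_monom)
qed

lemma dx_sp_xsq:
  assumes i0: "i0 < m"
  shows "dx i0 (sp_xsq m n) = (\<lambda>x. -2 * xvar i0 x)"
proof -
  have "dx i0 (sp_xsq m n) = (\<lambda>x. - (\<Sum>i<m. real (double_unit_exp i i0)
      * sp_monom ((double_unit_exp i)(i0 := double_unit_exp i i0 - 1), {}) x))"
    by (simp add: sp_xsq_eq dx_diff dx_sum dx_monom)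
  also have "\<dots> = (\<lambda>x. - (2 * sp_monom ((double_unit_exp i0)(i0 := 1), {}) x))"
    by (subst sum_eq_single[of _ i0]) (use i0 in \<open>auto simp: double_unit_exp_def\<close>)
  also have "(double_unit_exp i0)(i0 := 1) = unit_exp i0"
    by (auto simp: double_unit_exp_def unit_exp_def fun_eq_iff)
  finally show ?thesis by (simp add: xvar_eq_monom)
qed

lemma sp_parity_sp_xsq: "sp_parity (sp_xsq m n) = sp_xsq m n"
proof -
  have "card {2*j, 2*j+1::nat} = 2" for j by simp
  then show ?thesis by (simp add: sp_xsq_eq sp_parity_diff sp_parity_sum sp_parity_monom)
qed

definition sp_euler :: "nat \<Rightarrow> nat \<Rightarrow> spoly \<Rightarrow> spoly" where
  "sp_euler m n g =
    (\<lambda>x. (\<Sum>i<m. sp_mult (xvar i) (dx i g) x) + (\<Sum>l<2*n. sp_mult (tvar l) (dtheta l g) x))"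

lemma sp_euler_lincomb:
  assumes I: "finite I" and u: "\<And>i. i \<in> I \<Longrightarrow> sp_finite (u i)"
  shows "sp_euler m n (\<lambda>x. \<Sum>i\<in>I. c i * u i x) = (\<lambda>x. \<Sum>i\<in>I. c i * sp_euler m n (u i) x)"
proof -
  have a: "sp_mult (xvar k) (dx k (\<lambda>x. \<Sum>i\<in>I. c i * u i x)) =
      (\<lambda>x. \<Sum>i\<in>I. c i * sp_mult (xvar k) (dx k (u i)) x)" for k
    unfolding dx_lincomb by (rule sp_mult_lincomb_right) (use I u sp_finite_dx in auto)
  have b: "sp_mult (tvar k) (dtheta k (\<lambda>x. \<Sum>i\<in>I. c i * u i x)) =
      (\<lambda>x. \<Sum>i\<in>I. c i * sp_mult (tvar k) (dtheta k (u i)) x)" for k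
    unfolding dtheta_lincomb by (rule sp_mult_lincomb_right) (use I u sp_finite_dtheta in auto)
  show ?thesis
    unfolding sp_euler_def a b
    by (simp add: sum.swap[of _ "{..<m}"] sum.swap[of _ "{..<2*n}"] sum_distrib_left sum.distrib
        distrib_left)
qed

lemma sp_euler_monom:
  assumes S: "S \<subseteq> {..<2*n}" and a: "\<forall>i\<ge>m. a i = 0"
  shows "sp_euler m n (sp_monom (a,S)) = (\<lambda>x. real (monom_deg m (a,S)) * sp_monom (a,S) x)"
proof -
  have fS: "finite S" using S finite_subset by blast
  have xpart: "sp_mult (xvar i) (dx i (sp_monom (a,S))) = (\<lambda>x. real (a i) * sp_monom (a,S) x)" for i
  proof (cases "a i = 0")
    case True
    then show ?thesis by (simp add: dx_monom)
  next
    case False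
    then have e: "(\<lambda>k. unit_exp i k + (if k = i then a i - Suc 0 else a k)) = a"
      by (auto simp: unit_exp_def fun_eq_iff)
    show ?thesis by (simp add: dx_monom sp_mult_scale_right xvar_eq_monom sp_mult_monom e)
  qed
  have tpart: "sp_mult (tvar l) (dtheta l (sp_monom (a,S))) =
      (\<lambda>x. (if l \<in> S then 1 else 0) * sp_monom (a,S) x)" for l
  proof (cases "l \<in> S")
    case False
    then show ?thesis by (simp add: dtheta_monom dtheta_sign_def)
  next
    case True
    have e: "{l} \<union> (S - {l}) = S" using True by auto
    have k: "monom_mult_sign {l} (S - {l}) = (-1) ^ card_below S l"
      using perm_sign_singleton_left[of "S - {l}" l] fS by (simp add: monom_mult_sign_def)
    show ?thesis using True e k
      by (simp add: dtheta_monom sp_mult_scale_right tvar_eq_monom sp_mult_monom dtheta_sign_def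
          neg_one_power_square)
  qed
  have cS: "(\<Sum>l<2*n. (if l \<in> S then 1 else 0 :: real)) = real (card S)"
  proof -
    have "(\<Sum>l<2*n. (if l \<in> S then 1 else 0 :: real)) = real (card ({..<2*n} \<inter> S))"
      by (simp add: sum.If_cases)
    also have "{..<2*n} \<inter> S = S" using S by auto
    finally show ?thesis .
  qed
  show ?thesis
    unfolding sp_euler_def xpart tpart
    by (simp add: sum_distrib_right[symmetric] cS monom_deg_def distrib_right)
qed

lemma sp_euler_homogeneous:
  assumes g: "g \<in> SP m n" and hg: "homogeneous m q g"
  shows "sp_euler m n g = (\<lambda>x. real q * g x)"
proof -
  have fg: "sp_finite g" using g SP_imp_sp_finite by blast
  have e: "g = (\<lambda>x. \<Sum>p\<in>supp g. g p * sp_monom p x)" by (rule sp_monom_expansion) fact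
  have "sp_euler m n g = sp_euler m n (\<lambda>x. \<Sum>p\<in>supp g. g p * sp_monom p x)" using arg_cong[OF e] .
  also have "\<dots> = (\<lambda>x. \<Sum>p\<in>supp g. g p * sp_euler m n (sp_monom p) x)"
    by (rule sp_euler_lincomb) (use fg in \<open>auto simp: sp_finite_def supp_sp_monom\<close>)
  also have "\<dots> = (\<lambda>x. \<Sum>p\<in>supp g. g p * (real q * sp_monom p x))"
  proof (intro ext sum.cong refl)
    fix x p assume p: "p \<in> supp g"
    obtain a S where pa: "p = (a,S)" by (cases p)
    have "S \<subseteq> {..<2*n}" "\<forall>i\<ge>m. a i = 0" using SP_D[OF g, of p] p pa by auto
    then have "sp_euler m n (sp_monom p) x = real (monom_deg m p) * sp_monom p x"
      using sp_euler_monom pa by simp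
    moreover have "monom_deg m p = q" using homogeneousD[OF hg] p by simp
    ultimately show "g p * sp_euler m n (sp_monom p) x = g p * (real q * sp_monom p x)" by simp
  qed
  also have "\<dots> = (\<lambda>x. real q * g x)"
    by (subst (2) e) (simp add: sum_distrib_left mult_ac)
  finally show ?thesis .
qed

lemma SP_sp_xsq: "sp_xsq m n \<in> SP m n"
proof -
  have "sp_xsq m n = (\<lambda>x. (\<Sum>j\<in>{..<n}. 1 * sp_monom (\<lambda>_. 0, {2*j, 2*j+1}) x)
      + (\<Sum>i\<in>{..<m}. (-1) * sp_monom (double_unit_exp i, {}) x))"
    by (simp add: sp_xsq_eq sum_negf)
  also have "\<dots> \<in> SP m n"
    by (intro SP_add SP_lincomb SP_sp_monom) (auto simp: double_unit_exp_def)
  finally show ?thesis .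
qed

lemma homogeneous_sp_xsq: "homogeneous m 2 (sp_xsq m n)"
proof -
  have "sp_xsq m n = (\<lambda>x. (\<Sum>j\<in>{..<n}. 1 * sp_monom (\<lambda>_. 0, {2*j, 2*j+1}) x)
      + (\<Sum>i\<in>{..<m}. (-1) * sp_monom (double_unit_exp i, {}) x))"
    by (simp add: sp_xsq_eq sum_negf)
  moreover have "homogeneous m 2 (sp_monom (\<lambda>_. 0, {2*j, 2*j+1}))" for j
  proof -
    have "monom_deg m (\<lambda>_. 0, {2*j, 2*j+1}) = 2" by (simp add: monom_deg_def)
    then show ?thesis by (metis homogeneous_sp_monom)
  qed
  moreover have "homogeneous m 2 (sp_monom (double_unit_exp i, {}))" if "i < m" for i
  proof -
    have "(\<Sum>k<m. double_unit_exp i k) = 2" using that by (simp add: double_unit_exp_def sum.delta)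
    then have "monom_deg m (double_unit_exp i, {}) = 2" by (simp add: monom_deg_def)
    then show ?thesis by (metis homogeneous_sp_monom)
  qed
  ultimately show ?thesis by (auto intro!: homogeneous_add homogeneous_sum homogeneous_sum_neg)
qed

lemma sp_lap_sp_xsq: "sp_lap m n (sp_xsq m n) = (\<lambda>x. 2 * superdim m n * sp_one x)"
proof -
  have dtheta_dtheta: "dtheta (2*j) (dtheta (2*j+1) (sp_xsq m n)) = (\<lambda>x. - sp_one x)"
    if "j < n" for j
  proof -
    have "card_below {2*j} (2*j) = 0" by (simp add: card_below_def)
    then show ?thesis
      unfolding dtheta_odd_sp_xsq[OF that] dtheta_minus
      by (simp add: tvar_eq_monom dtheta_monom dtheta_sign_def sp_one_eq_monom)
  qed
  have dx_dx: "dx i (dx i (sp_xsq m n)) = (\<lambda>x. -2 * sp_one x)" if "i < m" for i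
  proof -
    have "(unit_exp i)(i := unit_exp i i - 1) = (\<lambda>_. 0)" by (auto simp: unit_exp_def fun_eq_iff)
    then show ?thesis
      unfolding dx_sp_xsq[OF that] dx_scale
      by (simp add: xvar_eq_monom dx_monom sp_one_eq_monom unit_exp_def)
  qed
  have theta_sum: "(\<Sum>j<n. dtheta (2*j) (dtheta (2*j+1) (sp_xsq m n)) p) = (\<Sum>j<n. - sp_one p)" for p
    by (rule sum.cong) (simp_all add: dtheta_dtheta[simplified])
  have x_sum: "(\<Sum>i<m. dx i (dx i (sp_xsq m n)) p) = (\<Sum>i<m. -2 * sp_one p)" for p
    by (rule sum.cong) (simp_all add: dx_dx)
  show ?thesis
    unfolding sp_lap_def theta_sum x_sum by (simp add: algebra_simps superdim_def)
qed

lemma lap_cross_sp_xsq: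
  assumes g: "g \<in> SP m n"
  shows "lap_cross m n (sp_xsq m n) g = (\<lambda>x. 4 * sp_euler m n g x)"
proof -
  have parity_odd: "sp_parity (dtheta (2*j+1) (sp_xsq m n)) = tvar (2*j)" if "j < n" for j
    using dtheta_odd_sp_xsq[OF that, of m] by (simp add: sp_parity_minus tvar_eq_monom sp_parity_monom)
  have even_parity: "dtheta (2*j) (sp_parity (sp_xsq m n)) = tvar (2*j+1)" if "j < n" for j
    using dtheta_even_sp_xsq[OF that, of m] by (simp add: sp_parity_sp_xsq)
  have dx_term: "sp_mult (dx i (sp_xsq m n)) (dx i g) =
      (\<lambda>x. -2 * sp_mult (xvar i) (dx i g) x)" if "i < m" for i
    unfolding dx_sp_xsq[OF that]
    by (rule sp_mult_scale_left) (simp_all add: sp_finite_dx SP_imp_sp_finite[OF g])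
  have theta_sum: "(\<Sum>j<n. sp_mult (sp_parity (dtheta (2*j+1) (sp_xsq m n))) (dtheta (2*j) g) x
        + sp_mult (dtheta (2*j) (sp_parity (sp_xsq m n))) (dtheta (2*j+1) g) x)
      = (\<Sum>j<n. sp_mult (tvar (2*j)) (dtheta (2*j) g) x + sp_mult (tvar (2*j+1)) (dtheta (2*j+1) g) x)"
    for x
    by (rule sum.cong) (simp_all add: parity_odd[simplified] even_parity[simplified])
  have x_sum: "(\<Sum>i<m. sp_mult (dx i (sp_xsq m n)) (dx i g) x) =
      (\<Sum>i<m. -2 * sp_mult (xvar i) (dx i g) x)" for x
    by (rule sum.cong) (simp_all add: dx_term)
  have theta_split: "(\<Sum>l<2*n. sp_mult (tvar l) (dtheta l g) x) =
      (\<Sum>j<n. sp_mult (tvar (2*j)) (dtheta (2*j) g) x + sp_mult (tvar (2*j+1)) (dtheta (2*j+1) g) x)"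
    for x
    by (rule sum_lessThan_double)
  show ?thesis
    unfolding lap_cross_def sp_euler_def theta_sum x_sum theta_split
    by (simp add: fun_eq_iff sum_negf flip: sum_distrib_left)
qed

lemma homogeneous_sp_xsq_mult:
  assumes "g \<in> SP m n" "homogeneous m (d - 2) g" "2 \<le> d"
  shows "homogeneous m d (sp_mult (sp_xsq m n) g)"
proof -
  have "2 + (d - 2) = d" using assms(3) by simp
  then show ?thesis using homogeneous_sp_mult[OF homogeneous_sp_xsq assms(2) SP_sp_xsq assms(1)]
    by metis
qed

definition lap_xsq_coeff :: "nat \<Rightarrow> nat \<Rightarrow> nat \<Rightarrow> real" where
  "lap_xsq_coeff m n q = 2 * superdim m n + 4 * real q"

lemma sp_lap_xsq_mult:
  assumes g: "g \<in> SP m n" and hg: "homogeneous m q g"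
  shows "sp_lap m n (sp_mult (sp_xsq m n) g) =
    (\<lambda>x. sp_mult (sp_xsq m n) (sp_lap m n g) x + lap_xsq_coeff m n q * g x)"
proof -
  have fg: "sp_finite g" using g SP_imp_sp_finite by blast
  have "sp_mult (sp_lap m n (sp_xsq m n)) g = (\<lambda>x. 2 * superdim m n * g x)"
    by (simp add: sp_lap_sp_xsq sp_mult_scale_left fg sp_mult_one_left)
  then show ?thesis
    using sp_lap_sp_mult[OF SP_sp_xsq g] lap_cross_sp_xsq[OF g] sp_euler_homogeneous[OF g hg]
    by (simp add: fun_eq_iff algebra_simps lap_xsq_coeff_def)
qed

section \<open>Fischer decomposition\<close>

text \<open>The condition under which \<open>g \<mapsto> x\<^sup>2 \<Delta>g + \<mu> g\<close> is invertible in degree \<open>q\<close>: applying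
  \<open>\<Delta>\<close> repeatedly turns it into the same operator in degrees \<open>q - 2, q - 4, \<dots>\<close> with shifted
  constants, none of which may vanish.\<close>
definition nonresonant :: "nat \<Rightarrow> nat \<Rightarrow> nat \<Rightarrow> real \<Rightarrow> bool" where
  "nonresonant m n q \<mu> \<longleftrightarrow>
     (\<forall>t. 2 * t \<le> q \<longrightarrow> \<mu> + (\<Sum>s<t. lap_xsq_coeff m n (q - 2 - 2 * s)) \<noteq> 0)"

lemma nonresonant_nonzero: "nonresonant m n q \<mu> \<Longrightarrow> \<mu> \<noteq> 0"
  unfolding nonresonant_def by (drule spec[of _ 0]) simp

lemma nonresonant_step:
  assumes "nonresonant m n q \<mu>" "2 \<le> q"
  shows "nonresonant m n (q - 2) (\<mu> + lap_xsq_coeff m n (q - 2))"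
  unfolding nonresonant_def
proof (intro allI impI)
  fix t assume t: "2 * t \<le> q - 2"
  have "(\<Sum>s<Suc t. lap_xsq_coeff m n (q - 2 - 2 * s))
      = lap_xsq_coeff m n (q - 2 - 2 * 0) + (\<Sum>s<t. lap_xsq_coeff m n (q - 2 - 2 * Suc s))"
    by (rule sum.lessThan_Suc_shift)
  moreover have "(\<Sum>s<t. lap_xsq_coeff m n (q - 2 - 2 * Suc s))
      = (\<Sum>s<t. lap_xsq_coeff m n (q - 2 - 2 - 2 * s))"
    by (intro sum.cong refl arg_cong[where f="lap_xsq_coeff m n"]) simp
  moreover have "2 * Suc t \<le> q" using t assms(2) by simp
  then have "\<mu> + (\<Sum>s<Suc t. lap_xsq_coeff m n (q - 2 - 2 * s)) \<noteq> 0"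
    by (rule assms(1)[unfolded nonresonant_def, rule_format])
  ultimately show "\<mu> + lap_xsq_coeff m n (q - 2) + (\<Sum>s<t. lap_xsq_coeff m n (q - 2 - 2 - 2 * s)) \<noteq> 0"
    by (simp add: add.assoc)
qed

lemma nonresonant_lap_xsq_coeff:
  assumes "\<forall>j::nat. superdim m n \<noteq> - 2 * real j"
  shows "nonresonant m n q (lap_xsq_coeff m n q)"
  unfolding nonresonant_def
proof (intro allI impI)
  fix t assume t: "2 * t \<le> q"
  have "lap_xsq_coeff m n q + (\<Sum>s<t. lap_xsq_coeff m n (q - 2 - 2 * s))
      = (real t + 1) * (2 * superdim m n + 4 * real q - 4 * real t)" if "2 * t \<le> q" for t
    using that
  proof (induction t)
    case (Suc t)
    then have "real (q - 2 - 2 * t) = real q - 2 - 2 * real t" by (simp add: of_nat_diff)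
    with Suc show ?case by (simp add: lap_xsq_coeff_def algebra_simps)
  qed (simp add: lap_xsq_coeff_def)
  moreover have "superdim m n \<noteq> - 2 * real (q - t)" using assms by blast
  then have "2 * superdim m n + 4 * real q - 4 * real t \<noteq> 0"
    using t by (simp add: of_nat_diff algebra_simps)
  ultimately show "lap_xsq_coeff m n q + (\<Sum>s<t. lap_xsq_coeff m n (q - 2 - 2 * s)) \<noteq> 0"
    using t by simp
qed

text \<open>Induction on the degree: \<open>\<Delta>\<close> of the wanted identity is the same kind of identity for
  \<open>\<Delta>g\<close> in degree \<open>q - 2\<close>, so \<open>w = \<Delta>g\<close> is found first and then \<open>g = (y - x\<^sup>2 w) / \<mu>\<close>.\<close>
lemma xsq_lap_plus_scalar_surj:
  assumes "y \<in> SP m n" "homogeneous m q y" "nonresonant m n q \<mu>"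
  shows "\<exists>g. g \<in> SP m n \<and> homogeneous m q g \<and>
    (\<lambda>x. sp_mult (sp_xsq m n) (sp_lap m n g) x + \<mu> * g x) = y"
  using assms
proof (induction q arbitrary: y \<mu> rule: less_induct)
  case (less q)
  note y = less.prems(1) and hy = less.prems(2)
  have \<mu>: "\<mu> \<noteq> 0" using nonresonant_nonzero[OF less.prems(3)] .
  show ?case
  proof (cases "q < 2")
    case True
    define g where "g = (\<lambda>x. (1/\<mu>) * y x)"
    have g: "g \<in> SP m n" "homogeneous m q g"
      unfolding g_def using SP_scale[OF y] homogeneous_scale[OF hy] by blast+
    have "sp_lap m n g = (\<lambda>_. 0)" using homogeneous_sp_lap[OF g(2) g(1)] True by blast
    then show ?thesis using g \<mu> by (auto simp: g_def)
  next
    case False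
    define \<mu>' where "\<mu>' = \<mu> + lap_xsq_coeff m n (q - 2)"
    obtain w where w: "w \<in> SP m n" "homogeneous m (q - 2) w"
      and w_eq: "(\<lambda>x. sp_mult (sp_xsq m n) (sp_lap m n w) x + \<mu>' * w x) = sp_lap m n y"
      using less.IH[of "q - 2" "sp_lap m n y" \<mu>'] False SP_sp_lap[OF y] homogeneous_sp_lap[OF hy y]
        nonresonant_step[OF less.prems(3)] by (auto simp: \<mu>'_def)
    define xw where "xw = sp_mult (sp_xsq m n) w"
    have xw: "xw \<in> SP m n" "homogeneous m q xw"
      using SP_sp_mult[OF SP_sp_xsq w(1)] homogeneous_sp_xsq_mult[OF w] False
        by (simp_all add: xw_def)
    define g where "g = (\<lambda>x. (1/\<mu>) * y x + (- 1/\<mu>) * xw x)"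
    have g: "g \<in> SP m n" "homogeneous m q g"
      unfolding g_def
        by (intro SP_add SP_scale y xw(1)) (intro homogeneous_add homogeneous_scale hy xw(2))
    have "sp_lap m n g = (\<lambda>x. (1/\<mu>) * sp_lap m n y x + (- 1/\<mu>) * sp_lap m n xw x)"
      by (simp only: g_def sp_lap_add sp_lap_scale)
    also have "\<dots> = w"
      using \<mu> w_eq sp_lap_xsq_mult[OF w]
      by (auto simp: fun_eq_iff xw_def \<mu>'_def field_simps dest: fun_cong)
    finally have "(\<lambda>x. sp_mult (sp_xsq m n) (sp_lap m n g) x + \<mu> * g x) = (\<lambda>x. xw x + \<mu> * g x)"
      by (simp add: xw_def)
    also have "\<dots> = y" using \<mu> by (simp add: g_def fun_eq_iff field_simps)
    finally show ?thesis using g by blast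
  qed
qed

lemma sp_lap_xsq_mult_surj:
  assumes "\<forall>j::nat. superdim m n \<noteq> - 2 * real j"
    and y: "y \<in> SP m n" and hy: "homogeneous m q y"
  obtains g where "g \<in> SP m n" "homogeneous m q g" "sp_lap m n (sp_mult (sp_xsq m n) g) = y"
proof -
  obtain g where g: "g \<in> SP m n" "homogeneous m q g"
    and g_eq: "(\<lambda>x. sp_mult (sp_xsq m n) (sp_lap m n g) x + lap_xsq_coeff m n q * g x) = y"
    using xsq_lap_plus_scalar_surj[OF y hy nonresonant_lap_xsq_coeff[OF assms(1)]] by blast
  then show ?thesis using that sp_lap_xsq_mult[OF g] by simp
qed

lemma Hk_of_degree_less_2:
  "f \<in> SP m n \<Longrightarrow> homogeneous m d f \<Longrightarrow> d < 2 \<Longrightarrow> f \<in> Hk m n d"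
  using homogeneous_sp_lap by (simp add: Hk_def)

text \<open>Take \<open>g\<close> with \<open>\<Delta>(x\<^sup>2 g) = \<Delta>f\<close>; then \<open>f - x\<^sup>2 g\<close> is harmonic.\<close>
lemma fischer_decomposition:
  assumes M: "\<forall>j::nat. superdim m n \<noteq> - 2 * real j"
    and f: "f \<in> SP m n" and hf: "homogeneous m d f" and d: "2 \<le> d"
  obtains h g where "h \<in> Hk m n d" "g \<in> SP m n" "homogeneous m (d - 2) g"
    "f = (\<lambda>x. h x + sp_mult (sp_xsq m n) g x)"
proof -
  obtain g where g: "g \<in> SP m n" "homogeneous m (d - 2) g"
    and g_eq: "sp_lap m n (sp_mult (sp_xsq m n) g) = sp_lap m n f"
    using sp_lap_xsq_mult_surj[OF M SP_sp_lap[OF f]] homogeneous_sp_lap[OF hf f] by blast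
  define xg where "xg = sp_mult (sp_xsq m n) g"
  have xg: "xg \<in> SP m n" "homogeneous m d xg"
    using SP_sp_mult[OF SP_sp_xsq g(1)] homogeneous_sp_xsq_mult[OF g d] by (simp_all add: xg_def)
  define h where "h = (\<lambda>x. f x + (-1) * xg x)"
  have "h \<in> SP m n" "homogeneous m d h"
    unfolding h_def
      by (intro SP_add SP_scale f xg(1)) (intro homogeneous_add homogeneous_scale hf xg(2))
  moreover have "sp_lap m n h = (\<lambda>_. 0)"
    using g_eq by (simp add: h_def sp_lap_diff xg_def)
  ultimately have "h \<in> Hk m n d" by (simp add: Hk_def)
  moreover have "f = (\<lambda>x. h x + xg x)" by (simp add: h_def)
  ultimately show ?thesis using that g unfolding xg_def by blast
qed

definition hom_part :: "nat \<Rightarrow> nat \<Rightarrow> spoly \<Rightarrow> spoly" where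
  "hom_part m d f = (\<lambda>p. if monom_deg m p = d then f p else 0)"

lemma sum_hom_parts:
  assumes f: "sp_finite f"
  shows "f = (\<lambda>x. \<Sum>d\<in>monom_deg m ` supp f. hom_part m d f x)"
proof
  fix x
  have fs: "finite (monom_deg m ` supp f)" using f by (simp add: sp_finite_def)
  have "(\<Sum>d\<in>monom_deg m ` supp f. hom_part m d f x)
      = (\<Sum>d\<in>monom_deg m ` supp f. if d = monom_deg m x then f x else 0)"
    by (intro sum.cong) (auto simp: hom_part_def)
  also have "\<dots> = (if monom_deg m x \<in> monom_deg m ` supp f then f x else 0)"
    using fs by (simp add: sum.delta)
  also have "\<dots> = f x" by auto
  finally show "f x = (\<Sum>d\<in>monom_deg m ` supp f. hom_part m d f x)" by simp
qed

lemma SP_hom_part: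
  assumes "f \<in> SP m n" shows "hom_part m d f \<in> SP m n"
proof -
  have "supp (hom_part m d f) \<subseteq> supp f" by (auto simp: hom_part_def split: if_splits)
  then show ?thesis using assms unfolding SP_def by (auto intro: finite_subset)
qed

lemma homogeneous_hom_part: "homogeneous m d (hom_part m d f)"
  by (rule homogeneousI) (auto simp: hom_part_def split: if_splits)

lemma homogeneous_0_eq_const:
  assumes f: "f \<in> SP m n" and h: "homogeneous m 0 f"
  shows "f = (\<lambda>x. eval0 f * sp_one x)"
proof
  fix x :: monomial
  obtain a S where x: "x = (a,S)" by (cases x)
  show "f x = eval0 f * sp_one x"
  proof (cases "f x = 0")
    case True
    then show ?thesis by (auto simp: sp_one_def eval0_def x)
  next
    case False
    have S: "S \<subseteq> {..<2*n}" "\<forall>i\<ge>m. a i = 0" using SP_D[OF f False] x by auto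
    have "(\<Sum>i<m. a i) =
        0" "card S = 0" using homogeneousD[OF h False] by (auto simp: monom_deg_def x)
    moreover have "finite S" using S(1) finite_subset by blast
    ultimately have "\<forall>i<m. a i = 0" "S = {}" by auto
    then have "a = (\<lambda>_. 0)" using S(2) by (auto simp: fun_eq_iff) (meson not_le)
    then show ?thesis using \<open>S = {}\<close> by (simp add: x sp_one_def eval0_def)
  qed
qed

definition sp_linear_functional :: "nat \<Rightarrow> nat \<Rightarrow> (spoly \<Rightarrow> real) \<Rightarrow> bool" where
  "sp_linear_functional m n V \<longleftrightarrow>
     (\<forall>f\<in>SP m n. \<forall>g\<in>SP m n. V (\<lambda>x. f x + g x) = V f + V g) \<and>
     (\<forall>c. \<forall>f\<in>SP m n. V (\<lambda>x. c * f x) = c * V f)"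

lemma sp_linear_functional_diff:
  assumes "sp_linear_functional m n V" "sp_linear_functional m n W"
  shows "sp_linear_functional m n (\<lambda>f. V f - c * W f)"
  using assms by (simp add: sp_linear_functional_def algebra_simps)

lemma sp_linear_functional_sum:
  assumes V: "sp_linear_functional m n V" and "finite D" "\<forall>d\<in>D. u d \<in> SP m n"
  shows "V (\<lambda>x. \<Sum>d\<in>D. u d x) = (\<Sum>d\<in>D. V (u d))"
  using assms(2,3)
proof (induction D rule: finite_induct)
  case empty
  have "V (\<lambda>x. 0 * (\<lambda>_. 0) x) = 0 * V (\<lambda>_. 0)"
    by (rule V[unfolded sp_linear_functional_def, THEN conjunct2, rule_format]) simp
  then show ?case by simp
next
  case (insert d D)
  have "(\<lambda>x. \<Sum>d\<in>D. u d x) \<in> SP m n"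
    using SP_lincomb[of D u m n "\<lambda>_. 1"] insert by simp
  then show ?case using V insert by (auto simp: sp_linear_functional_def)
qed

text \<open>Induction on the degree of homogeneous elements via the Fischer decomposition
  \<open>f = h + x\<^sup>2 g\<close>, then summation over homogeneous parts.\<close>
lemma sp_linear_functional_eq_zero:
  assumes M: "\<forall>j::nat. superdim m n \<noteq> - 2 * real j"
    and V: "sp_linear_functional m n V"
    and xsq: "\<forall>g\<in>SP m n. \<forall>q. homogeneous m q g \<longrightarrow> V (sp_mult (sp_xsq m n) g) = - V g"
    and harm: "\<forall>k\<ge>1. \<forall>h\<in>Hk m n k. V h = 0"
    and one: "V sp_one = 0"
    and f: "f \<in> SP m n"
  shows "V f = 0"
proof -
  have hom: "V f = 0" if "f \<in> SP m n" "homogeneous m d f" for f d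
    using that
  proof (induction d arbitrary: f rule: less_induct)
    case (less d)
    consider "d = 0" | "d = 1" | "2 \<le> d" by linarith
    then show ?case
    proof cases
      case 1
      then have "V f = eval0 f * V sp_one"
        using V homogeneous_0_eq_const[of f m n] less.prems
          by (metis SP_sp_one sp_linear_functional_def)
      then show ?thesis using one by simp
    next
      case 2
      then show ?thesis using harm Hk_of_degree_less_2[OF less.prems] by force
    next
      case 3
      obtain h g where h: "h \<in> Hk m n d" and g: "g \<in> SP m n" "homogeneous m (d - 2) g"
        and f_eq: "f = (\<lambda>x. h x + sp_mult (sp_xsq m n) g x)"
        using fischer_decomposition[OF M less.prems 3] by blast
      have "V f = V h + V (sp_mult (sp_xsq m n) g)"
        using V h SP_sp_mult[OF SP_sp_xsq g(1)] by (simp add: f_eq sp_linear_functional_def Hk_def)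
      also have "\<dots> = - V g"
        using harm h 3 xsq g by (metis (no_types, lifting) add_0 dual_order.trans one_le_numeral)
      also have "\<dots> = 0" using less.IH[of "d - 2"] 3 g by simp
      finally show ?thesis .
    qed
  qed
  have fin: "sp_finite f" using f SP_imp_sp_finite by blast
  have "V f = V (\<lambda>x. \<Sum>d\<in>monom_deg m ` supp f. hom_part m d f x)"
    by (subst sum_hom_parts[OF fin, of m]) (rule refl)
  also have "\<dots> = (\<Sum>d\<in>monom_deg m ` supp f. V (hom_part m d f))"
    using fin SP_hom_part[OF f] by (intro sp_linear_functional_sum[OF V]) (auto simp: sp_finite_def)
  also have "\<dots> = 0"
    using hom SP_hom_part[OF f] homogeneous_hom_part by (intro sum.neutral) blast
  finally show ?thesis .
qed

section \<open>The Pizzetti integral\<close>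

definition pizzetti_coeff :: "nat \<Rightarrow> nat \<Rightarrow> nat \<Rightarrow> real" where
  "pizzetti_coeff m n k = (-1) ^ k * (2 * pi powr (superdim m n / 2))
     / (4 ^ k * fact k * Gamma (real k + superdim m n / 2))"

lemma pizzetti_eq_suminf:
  "pizzetti m n R = (\<Sum>k. pizzetti_coeff m n k * eval0 ((sp_lap m n ^^ k) R))"
  by (simp add: pizzetti_def pizzetti_coeff_def)

lemma eval0_zero [simp]: "eval0 (\<lambda>_. 0) = 0"
  by (simp add: eval0_def)

lemma pizzetti_homogeneous:
  assumes f: "f \<in> SP m n" and hf: "homogeneous m d f"
  shows "pizzetti m n f =
    (if even d then pizzetti_coeff m n (d div 2) * eval0 ((sp_lap m n ^^ (d div 2)) f) else 0)"
proof -
  let ?N = "if even d then {d div 2} else {}"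
  have "eval0 ((sp_lap m n ^^ k) f) = 0" if "k \<notin> ?N" for k
  proof -
    have h: "homogeneous m (d - 2*k) ((sp_lap m n ^^ k) f)" "d < 2*k \<longrightarrow> (sp_lap m n ^^ k) f =
        (\<lambda>_. 0)"
      using homogeneous_sp_lap_pow[OF hf f] by auto
    moreover have "d \<noteq> 2*k" using that by (cases "even d") auto
    then have "d < 2*k \<or> 0 < d - 2*k" by auto
    ultimately show ?thesis using eval0_homogeneous[OF h(1)] by fastforce
  qed
  then have "pizzetti m n f = (\<Sum>k\<in>?N. pizzetti_coeff m n k * eval0 ((sp_lap m n ^^ k) f))"
    unfolding pizzetti_eq_suminf by (intro suminf_finite) auto
  then show ?thesis by simp
qed

lemma sp_lap_pow_eventually_zero:
  assumes f: "f \<in> SP m n"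
  obtains K where "\<forall>k\<ge>K. (sp_lap m n ^^ k) f = (\<lambda>_. 0)"
proof -
  have fin: "sp_finite f" using f SP_imp_sp_finite by blast
  define D where "D = monom_deg m ` supp f"
  have "finite D" using fin by (simp add: sp_finite_def D_def)
  have "(sp_lap m n ^^ k) f = (\<lambda>_. 0)" if k: "k \<ge> Suc (Max (insert 0 D))" for k
  proof -
    have "(sp_lap m n ^^ k) f = (sp_lap m n ^^ k) (\<lambda>x. \<Sum>d\<in>D. hom_part m d f x)"
      by (subst sum_hom_parts[OF fin, of m]) (simp add: D_def)
    also have "\<dots> = (\<lambda>x. \<Sum>d\<in>D. (sp_lap m n ^^ k) (hom_part m d f) x)"
      by (rule sp_lap_pow_sum)
    also have "\<dots> = (\<lambda>_. 0)"
    proof (intro ext sum.neutral ballI)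
      fix x d assume "d \<in> D"
      then have "d \<le> Max (insert 0 D)" using \<open>finite D\<close> by simp
      then have "d < 2 * k" using k by linarith
      then show "(sp_lap m n ^^ k) (hom_part m d f) x = 0"
        using homogeneous_sp_lap_pow[OF homogeneous_hom_part SP_hom_part[OF f], of d k] by simp
    qed
    finally show ?thesis .
  qed
  then show ?thesis using that by blast
qed

lemma pizzetti_eq_sum_lessThan:
  assumes "\<forall>k\<ge>K. (sp_lap m n ^^ k) f = (\<lambda>_. 0)"
  shows "pizzetti m n f = (\<Sum>k<K. pizzetti_coeff m n k * eval0 ((sp_lap m n ^^ k) f))"
  unfolding pizzetti_eq_suminf by (rule suminf_finite) (use assms in auto)

lemma sp_linear_functional_pizzetti: "sp_linear_functional m n (pizzetti m n)"
  unfolding sp_linear_functional_def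
proof (intro conjI allI ballI)
  fix f g assume f: "f \<in> SP m n" and g: "g \<in> SP m n"
  obtain K1 where "\<forall>k\<ge>K1. (sp_lap m n ^^ k) f = (\<lambda>_. 0)"
    using sp_lap_pow_eventually_zero[OF f] by blast
  moreover obtain K2 where "\<forall>k\<ge>K2. (sp_lap m n ^^ k) g = (\<lambda>_. 0)"
    using sp_lap_pow_eventually_zero[OF g] by blast
  ultimately have K: "\<forall>k\<ge>max K1 K2. (sp_lap m n ^^ k) f = (\<lambda>_. 0)"
    "\<forall>k\<ge>max K1 K2. (sp_lap m n ^^ k) g = (\<lambda>_. 0)"
    "\<forall>k\<ge>max K1 K2. (sp_lap m n ^^ k) (\<lambda>x. f x + g x) = (\<lambda>_. 0)"
    by (simp_all add: sp_lap_pow_add)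
  show "pizzetti m n (\<lambda>x. f x + g x) = pizzetti m n f + pizzetti m n g"
    unfolding pizzetti_eq_sum_lessThan[OF K(1)] pizzetti_eq_sum_lessThan[OF K(2)]
      pizzetti_eq_sum_lessThan[OF K(3)]
    by (simp add: sp_lap_pow_add eval0_def sum.distrib distrib_left)
next
  fix c f assume f: "f \<in> SP m n"
  obtain K where K: "\<forall>k\<ge>K. (sp_lap m n ^^ k) f = (\<lambda>_. 0)"
    using sp_lap_pow_eventually_zero[OF f] by blast
  then have K': "\<forall>k\<ge>K. (sp_lap m n ^^ k) (\<lambda>x. c * f x) = (\<lambda>_. 0)"
    by (simp add: sp_lap_pow_scale)
  show "pizzetti m n (\<lambda>x. c * f x) = c * pizzetti m n f"
    unfolding pizzetti_eq_sum_lessThan[OF K] pizzetti_eq_sum_lessThan[OF K']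
    by (simp add: sp_lap_pow_scale eval0_def sum_distrib_left mult_ac)
qed

lemma superdim_half_not_pole:
  assumes "\<forall>j::nat. superdim m n \<noteq> - 2 * real j"
  shows "real s + superdim m n / 2 \<notin> \<int>\<^sub>\<le>\<^sub>0"
proof
  assume "real s + superdim m n / 2 \<in> \<int>\<^sub>\<le>\<^sub>0"
  then obtain j :: nat where "real s + superdim m n / 2 = - real j"
    by (auto elim!: nonpos_Ints_cases')
  then have "superdim m n = - 2 * real (j + s)" by (simp add: algebra_simps)
  then show False using assms by blast
qed

lemma sp_lap_pow_xsq_mult:
  assumes g: "g \<in> SP m n" and hg: "homogeneous m q g" and t: "2 * t \<le> q"
  shows "(sp_lap m n ^^ Suc t) (sp_mult (sp_xsq m n) g) =
    (\<lambda>x. sp_mult (sp_xsq m n) ((sp_lap m n ^^ Suc t) g) x +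
       (real t + 1) * (2 * superdim m n + 4 * real q - 4 * real t) * (sp_lap m n ^^ t) g x)"
  using t
proof (induction t)
  case 0
  show ?case using sp_lap_xsq_mult[OF g hg] by (simp add: lap_xsq_coeff_def)
next
  case (Suc t)
  let ?c = "(real t + 1) * (2 * superdim m n + 4 * real q - 4 * real t)"
  let ?G = "(sp_lap m n ^^ Suc t) g"
  have G: "?G \<in> SP m n" "homogeneous m (q - 2 * Suc t) ?G"
    using SP_sp_lap_pow[OF g] homogeneous_sp_lap_pow[OF hg g, of "Suc t"] by blast+
  have q: "real (q - 2 * Suc t) =
      real q - 2 * real t - 2" using Suc.prems by (simp add: of_nat_diff)
  have "(sp_lap m n ^^ Suc (Suc t)) (sp_mult (sp_xsq m n) g)
      = sp_lap m n (\<lambda>x. sp_mult (sp_xsq m n) ?G x + ?c * (sp_lap m n ^^ t) g x)"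
    using Suc by simp
  also have "\<dots> =
      (\<lambda>x. sp_lap m n (sp_mult (sp_xsq m n) ?G) x + ?c * sp_lap m n ((sp_lap m n ^^ t) g) x)"
    by (simp add: sp_lap_add sp_lap_scale)
  also have "\<dots> = (\<lambda>x. sp_mult (sp_xsq m n) ((sp_lap m n ^^ Suc (Suc t)) g) x +
       (real (Suc t) + 1) * (2 * superdim m n + 4 * real q - 4 * real (Suc t))
         * (sp_lap m n ^^ Suc t) g x)"
    unfolding sp_lap_xsq_mult[OF G] lap_xsq_coeff_def q by (simp add: fun_eq_iff algebra_simps)
  finally show ?case .
qed

lemma pizzetti_coeff_Suc:
  assumes M: "\<forall>j::nat. superdim m n \<noteq> - 2 * real j"
  shows "pizzetti_coeff m n (Suc s) * ((real s + 1) * (2 * superdim m n + 4 * real s))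
    = - pizzetti_coeff m n s"
proof -
  define z where "z = real s + superdim m n / 2"
  have z: "z \<notin> \<int>\<^sub>\<le>\<^sub>0" using superdim_half_not_pole[OF M] by (simp add: z_def)
  define A where "A = 2 * pi powr (superdim m n / 2)"
  define B where "B = 4 ^ s * fact s * Gamma z"
  define W where "W = 4 * (real s + 1) * z"
  have "W \<noteq> 0" using z by (auto simp: W_def)
  have "Gamma (real (Suc s) + superdim m n / 2) = z * Gamma z"
    using Gamma_plus1[OF z] by (simp add: z_def algebra_simps)
  then have "pizzetti_coeff m n (Suc s) = - ((-1) ^ s * A) / (W * B)"
    unfolding pizzetti_coeff_def by (simp add: A_def B_def W_def algebra_simps)
  moreover have "(real s + 1) * (2 * superdim m n + 4 * real s) = W"
    by (simp add: W_def z_def algebra_simps)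
  ultimately have "pizzetti_coeff m n (Suc s) * ((real s + 1) * (2 * superdim m n + 4 * real s))
      = - ((-1) ^ s * A) / B"
    using \<open>W \<noteq> 0\<close> by simp
  also have "\<dots> = - pizzetti_coeff m n s" by (simp add: pizzetti_coeff_def A_def B_def z_def)
  finally show ?thesis .
qed

lemma pizzetti_xsq_mult:
  assumes M: "\<forall>j::nat. superdim m n \<noteq> - 2 * real j"
    and g: "g \<in> SP m n" and hg: "homogeneous m q g"
  shows "pizzetti m n (sp_mult (sp_xsq m n) g) = - pizzetti m n g"
proof -
  have xg: "sp_mult (sp_xsq m n) g \<in> SP m n" "homogeneous m (2 + q) (sp_mult (sp_xsq m n) g)"
    using SP_sp_mult[OF SP_sp_xsq g] homogeneous_sp_mult[OF homogeneous_sp_xsq hg SP_sp_xsq g]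
      by auto
  show ?thesis
  proof (cases "even q")
    case False
    then show ?thesis using pizzetti_homogeneous[OF xg] pizzetti_homogeneous[OF g hg] by simp
  next
    case True
    then obtain s where s: "q = 2 * s" by blast
    have "(sp_lap m n ^^ Suc s) g = (\<lambda>_. 0)"
      using homogeneous_sp_lap_pow[OF hg g, of "Suc s"] s by simp
    then have "eval0 ((sp_lap m n ^^ Suc s) (sp_mult (sp_xsq m n) g)) =
       (real s + 1) * (2 * superdim m n + 4 * real s) * eval0 ((sp_lap m n ^^ s) g)"
      using sp_lap_pow_xsq_mult[OF g hg, of s] s by (simp add: eval0_def algebra_simps)
    then show ?thesis
      using pizzetti_homogeneous[OF xg] pizzetti_homogeneous[OF g hg] pizzetti_coeff_Suc[OF M, of s] s
      by (simp add: mult.assoc[symmetric])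
  qed
qed

lemma homogeneous_sp_one: "homogeneous m 0 sp_one"
  using homogeneous_sp_monom[of m "(\<lambda>_. 0, {})"] by (simp add: sp_one_eq_monom monom_deg_def)

lemma sp_one_in_Hk: "sp_one \<in> Hk m n 0"
  using homogeneous_sp_lap[OF homogeneous_sp_one SP_sp_one] by (simp add: Hk_def homogeneous_sp_one)

lemma pizzetti_sp_one_nonzero:
  assumes "\<forall>j::nat. superdim m n \<noteq> - 2 * real j"
  shows "pizzetti m n sp_one \<noteq> 0"
proof -
  have "pizzetti m n sp_one = 2 * pi powr (superdim m n / 2) / Gamma (superdim m n / 2)"
    using pizzetti_homogeneous[OF SP_sp_one homogeneous_sp_one]
    by (simp add: pizzetti_coeff_def eval0_def sp_one_def)
  moreover have "Gamma (superdim m n / 2) \<noteq> 0"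
    using Gamma_nonzero superdim_half_not_pole[OF assms, of 0] by simp
  ultimately show ?thesis by simp
qed

lemma pizzetti_Hk:
  assumes h: "h \<in> Hk m n k" and k: "1 \<le> k"
  shows "pizzetti m n h = 0"
proof -
  have h': "h \<in> SP m n" "homogeneous m k h" "sp_lap m n h = (\<lambda>_. 0)" using h by (auto simp: Hk_def)
  have "(sp_lap m n ^^ Suc j) h = (\<lambda>_. 0)" for j
    using h'(3) by (simp only: funpow_Suc_right comp_def) simp
  moreover have "even k \<Longrightarrow> \<exists>j. k div 2 = Suc j" using k by presburger
  ultimately show ?thesis using pizzetti_homogeneous[OF h'(1,2)] by auto
qed

lemma pizzetti_orthogonal:
  assumes a: "a \<in> Hk m n k" and b: "b \<in> Hk m n l" and kl: "k \<noteq> l"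
  shows "pizzetti m n (sp_mult a b) = 0"
proof -
  have a': "a \<in> SP m n" "homogeneous m k a" "sp_harmonic m n a"
    and b': "b \<in> SP m n" "homogeneous m l b" "sp_harmonic m n b"
    using a b by (auto simp: Hk_def sp_harmonic_def)
  have "(sp_lap m n ^^ ((k + l) div 2)) (sp_mult a b) = (\<lambda>_. 0)" if "even (k + l)"
  proof (cases "k < l")
    case True
    then have "k < (k + l) div 2" using that by presburger
    then show ?thesis using sp_lap_pow_mult_harmonic[OF a'(1,2) _ b'(3)] by blast
  next
    case False
    then have "l < (k + l) div 2" using that kl by presburger
    then show ?thesis using sp_lap_pow_mult_harmonic[OF b'(1,2) _ a'(3)] by blast
  qed
  then show ?thesis
    using pizzetti_homogeneous[OF SP_sp_mult[OF a'(1) b'(1)]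
        homogeneous_sp_mult[OF a'(2) b'(2) a'(1) b'(1)]]
    by auto
qed

lemma ss_integration_sp_linear_functional:
  "ss_integration m n T \<Longrightarrow> sp_linear_functional m n T"
  by (simp add: ss_integration_def sp_linear_functional_def sp_add_def sp_scale_def)

lemma orthogonal_functional_vanishes_on_Hk:
  assumes orth: "\<forall>k l. k \<noteq> l \<longrightarrow> (\<forall>a\<in>Hk m n k. \<forall>b\<in>Hk m n l. T (sp_mult a b) = 0 \<and> T (sp_mult b a) = 0)"
    and k: "1 \<le> k" and h: "h \<in> Hk m n k"
  shows "T h = 0"
proof -
  have "sp_mult sp_one h = h"
    using h sp_mult_one_left SP_imp_sp_finite by (auto simp: Hk_def)
  moreover have "T (sp_mult sp_one h) = 0"
    using orth[rule_format, of 0 k sp_one h] sp_one_in_Hk h k by simp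
  ultimately show ?thesis by simp
qed

lemma functional_eq_pizzetti_multiple:
  assumes M: "\<forall>j::nat. superdim m n \<noteq> - 2 * real j"
    and T: "sp_linear_functional m n T"
    and xsq: "\<forall>f\<in>SP m n. T (sp_mult (sp_xsq m n) f) = - T f"
    and harm: "\<forall>k\<ge>1. \<forall>h\<in>Hk m n k. T h = 0"
    and R: "R \<in> SP m n"
  shows "T R = T sp_one / pizzetti m n sp_one * pizzetti m n R"
proof -
  define c where "c = T sp_one / pizzetti m n sp_one"
  have "T R - c * pizzetti m n R = 0"
  proof (rule sp_linear_functional_eq_zero[OF M _ _ _ _ R])
    show "sp_linear_functional m n (\<lambda>f. T f - c * pizzetti m n f)"
      by (rule sp_linear_functional_diff[OF T sp_linear_functional_pizzetti])
    show "\<forall>g\<in>SP m n. \<forall>q. homogeneous m q g \<longrightarrow>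
        T (sp_mult (sp_xsq m n) g) - c * pizzetti m n (sp_mult (sp_xsq m n) g)
          = - (T g - c * pizzetti m n g)"
      using xsq pizzetti_xsq_mult[OF M] by force
    show "\<forall>k\<ge>1. \<forall>h\<in>Hk m n k. T h - c * pizzetti m n h = 0"
      using harm pizzetti_Hk by force
    show "T sp_one - c * pizzetti m n sp_one = 0"
      using pizzetti_sp_one_nonzero[OF M] by (simp add: c_def)
  qed
  then show ?thesis by (simp add: c_def)
qed

lemma pizzetti_multiple_orthogonal:
  assumes TR: "\<forall>R\<in>SP m n. T R = c * pizzetti m n R"
    and kl: "k \<noteq> l" and a: "a \<in> Hk m n k" and b: "b \<in> Hk m n l"
  shows "T (sp_mult a b) = 0 \<and> T (sp_mult b a) = 0"
proof -
  have "sp_mult a b \<in> SP m n" "sp_mult b a \<in> SP m n"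
    using a b SP_sp_mult by (auto simp: Hk_def)
  moreover have "pizzetti m n (sp_mult a b) = 0" "pizzetti m n (sp_mult b a) = 0"
    using pizzetti_orthogonal[OF a b kl] pizzetti_orthogonal[OF b a] kl by auto
  ultimately show ?thesis using TR by simp
qed

theorem mainTheorem9:
  fixes m n :: nat and T :: "spoly \<Rightarrow> real"
  assumes M: "\<forall>j::nat. superdim m n \<noteq> - 2 * real j"
    and T: "ss_integration m n T"
    and nz: "\<exists>f\<in>SP m n. T f \<noteq> 0"
  shows "(\<forall>k l. k \<noteq> l \<longrightarrow> (\<forall>a\<in>Hk m n k. \<forall>b\<in>Hk m n l.
            T (sp_mult a b) = 0 \<and> T (sp_mult b a) = 0))
         \<longleftrightarrow> (\<exists>c. c \<noteq> 0 \<and> (\<forall>R\<in>SP m n. T R = c * pizzetti m n R))"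
proof
  assume orth: "\<forall>k l. k \<noteq> l \<longrightarrow> (\<forall>a\<in>Hk m n k. \<forall>b\<in>Hk m n l.
      T (sp_mult a b) = 0 \<and> T (sp_mult b a) = 0)"
  have harm: "\<forall>k\<ge>1. \<forall>h\<in>Hk m n k. T h = 0"
    using orthogonal_functional_vanishes_on_Hk[OF orth] by blast
  have xsq: "\<forall>f\<in>SP m n. T (sp_mult (sp_xsq m n) f) = - T f"
    using T by (simp add: ss_integration_def)
  define c where "c = T sp_one / pizzetti m n sp_one"
  have TR: "\<forall>R\<in>SP m n. T R = c * pizzetti m n R"
    unfolding c_def
    using functional_eq_pizzetti_multiple[OF M ss_integration_sp_linear_functional[OF T] xsq harm]
    by blast
  obtain f where "f \<in> SP m n" "T f \<noteq> 0" using nz by blast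
  then have "c \<noteq> 0" using TR by auto
  with TR show "\<exists>c. c \<noteq> 0 \<and> (\<forall>R\<in>SP m n. T R = c * pizzetti m n R)" by blast
next
  assume "\<exists>c. c \<noteq> 0 \<and> (\<forall>R\<in>SP m n. T R = c * pizzetti m n R)"
  then obtain c where "\<forall>R\<in>SP m n. T R = c * pizzetti m n R" by blast
  then show "\<forall>k l. k \<noteq> l \<longrightarrow> (\<forall>a\<in>Hk m n k. \<forall>b\<in>Hk m n l.
      T (sp_mult a b) = 0 \<and> T (sp_mult b a) = 0)"
    using pizzetti_multiple_orthogonal by blast
qed

end
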